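(* Let $H_0$ be a static simple graph with $n$ nodes and $m\ge n$ edges, and set $r=2^6(n+1)^2$ and $\alpha=\max(2^{20}m^2, r^2)$. Construct a temporal graph $G$ as follows. Its node set is $U\cup V\cup X\cup Y$ (disjoint), where $U=\{u_1,\dots,u_n\}$ and $V=\{v_1,\dots,v_n\}$ are two copies of the nodes of $H_0$, and $|X|=|Y|=r$. For every edge of $H_0$ between its $i$-th and $j$-th node, $G$ contains an edge $(u_i,u_j,1)$ and an edge $(v_i,v_j,1)$. For every $i$, $G$ contains $n\alpha$ parallel edges $(u_i,v_i,0)$. For every $x\in X$, $y\in Y$, $G$ contains $\alpha$ parallel edges $(x,y,0)$. Take $K=H=1$, $R=2$, and the single segment $T_1=[0,1]$. Let $\mathcal{P}=(P_1,P_2)$ be a partition of the nodes of $G$ that, together with some parameters $\Lambda$, maximizes $\mathcal{L}(\mathcal{P},\mathcal{T},g,\Lambda)$. Then either $X\subseteq P_1$ and $Y\subseteq P_2$, or $X\subseteq P_2$ and $Y\subseteq P_1$. Moreover, for every $i$, $u_i\in P_1$ implies $v_i\in P_2$, and $v_i\in P_1$ implies $u_i\in P_2$.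
   Context: A temporal graph $G=(V,E)$ consists of a finite node set and a finite multiset $E$ of undirected edges $(u,v,t)$, $u\neq v$, with timestamp $t\in\mathbb{R}$; parallel edges are allowed. For a time interval $T$ with duration $|T|$, $\mathrm{cnt}(u,v,T)$ is the number of edges (with multiplicity) between $u$ and $v$ with timestamp in $T$; $\ell(u,v,T,\lambda)=\mathrm{cnt}(u,v,T)\log\lambda-\lambda|T|$ (with $0\log 0=0$, $c\log0=-\infty$ for $c>0$); for node sets $A,B$, $\ell(A,B,T,\lambda)$ is the sum of $\ell(a,b,T,\lambda)$ over unordered pairs $\{a,b\}$, $a\in A$, $b\in B$, $a\ne b$, each counted once. With $K=H=1$ and a partition $(P_1,P_2)$ and parameters $\lambda_{11},\lambda_{12}=\lambda_{21},\lambda_{22}\ge0$, the log-likelihood is $\mathcal{L}=\sum_{1\le i\le j\le 2}\ell(P_i,P_j,T_1,\lambda_{ij})$. The maximization is over both the partition and the parameters. *)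

theory Defs
  imports Complex_Main "HOL-Library.Multiset" "HOL-Library.Extended_Real"
begin

text \<open>A temporal graph on node type 'v is a finite multiset of edges (u,v,t) with
  real timestamps; edges are undirected (the pair {u,v} is what matters).\<close>

type_synonym 'v tedges = "('v \<times> 'v \<times> real) multiset"

definition cnt :: "'v tedges \<Rightarrow> 'v set \<Rightarrow> real \<Rightarrow> real \<Rightarrow> nat" where
  "cnt G e lo hi = size (filter_mset (\<lambda>(a,b,t). {a,b} = e \<and> lo \<le> t \<and> t \<le> hi) G)"

definition ell0 :: "nat \<Rightarrow> real \<Rightarrow> real \<Rightarrow> ereal" where
  "ell0 c lam d = (if lam = 0 then (if c = 0 then 0 else - \<infinity>)
                   else ereal (real c * ln lam - lam * d))"

definition upairs :: "'v set \<Rightarrow> 'v set \<Rightarrow> 'v set set" where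
  "upairs A B = {{a,b} | a b. a \<in> A \<and> b \<in> B \<and> a \<noteq> b}"

definition ellAB :: "'v tedges \<Rightarrow> 'v set \<Rightarrow> 'v set \<Rightarrow> real \<Rightarrow> real \<Rightarrow> real \<Rightarrow> ereal" where
  "ellAB G A B lo hi lam = (\<Sum>e\<in>upairs A B. ell0 (cnt G e lo hi) lam (hi - lo))"

text \<open>Log-likelihood with K = H = 1, R = 2, single segment T_1 = [0,1].\<close>
definition LL :: "'v tedges \<Rightarrow> 'v set \<Rightarrow> 'v set \<Rightarrow> real \<Rightarrow> real \<Rightarrow> real \<Rightarrow> ereal" where
  "LL G P1 P2 l11 l12 l22 =
     ellAB G P1 P1 0 1 l11 + ellAB G P1 P2 0 1 l12 + ellAB G P2 P2 0 1 l22"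

definition is_partition2 :: "'v set \<Rightarrow> 'v set \<Rightarrow> 'v set \<Rightarrow> bool" where
  "is_partition2 N P1 P2 \<longleftrightarrow> P1 \<union> P2 = N \<and> P1 \<inter> P2 = {}"

definition is_ML_partition :: "'v tedges \<Rightarrow> 'v set \<Rightarrow> 'v set \<Rightarrow> 'v set \<Rightarrow> bool" where
  "is_ML_partition G N P1 P2 \<longleftrightarrow> is_partition2 N P1 P2 \<and>
     (\<exists>l11 l12 l22. l11 \<ge> 0 \<and> l12 \<ge> 0 \<and> l22 \<ge> 0 \<and>
        (\<forall>Q1 Q2 m11 m12 m22. is_partition2 N Q1 Q2 \<and> m11 \<ge> 0 \<and> m12 \<ge> 0 \<and> m22 \<ge> 0
            \<longrightarrow> LL G Q1 Q2 m11 m12 m22 \<le> LL G P1 P2 l11 l12 l22))"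

datatype gnode = NU nat | NV nat | NX nat | NY nat

definition simple_graph :: "nat \<Rightarrow> (nat \<Rightarrow> nat \<Rightarrow> bool) \<Rightarrow> bool" where
  "simple_graph n E \<longleftrightarrow> (\<forall>i j. E i j \<longrightarrow> i < n \<and> j < n \<and> i \<noteq> j \<and> E j i)"

definition sedges :: "nat \<Rightarrow> (nat \<Rightarrow> nat \<Rightarrow> bool) \<Rightarrow> (nat \<times> nat) set" where
  "sedges n E = {(i,j). i < j \<and> j < n \<and> E i j}"

definition red_r :: "nat \<Rightarrow> nat" where
  "red_r n = 2^6 * (n+1)^2"

definition red_alpha :: "nat \<Rightarrow> nat \<Rightarrow> nat" where
  "red_alpha n m = max (2^20 * m^2) ((red_r n)^2)"

definition red_nodes :: "nat \<Rightarrow> gnode set" where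
  "red_nodes n = NU ` {..<n} \<union> NV ` {..<n} \<union> NX ` {..<red_r n} \<union> NY ` {..<red_r n}"

definition red_graph :: "nat \<Rightarrow> (nat \<Rightarrow> nat \<Rightarrow> bool) \<Rightarrow> gnode tedges" where
  "red_graph n E =
    (let r = red_r n; a = red_alpha n (card (sedges n E)) in
       (\<Sum>(i,j)\<in>sedges n E. {#(NU i, NU j, 1), (NV i, NV j, 1)#})
     + (\<Sum>i<n. replicate_mset (n * a) (NU i, NV i, 0))
     + (\<Sum>(x,y)\<in>{..<r} \<times> {..<r}. replicate_mset a (NX x, NY y, 0)))"

end

theory Submission
  imports Defs
begin

text \<open>Maximising over the rates turns the likelihood of a partition into the sum, over its three
  blocks, of the profile likelihood \<open>C ln (C / N) - C\<close> of a block with \<open>C\<close> edges on \<open>N\<close> node pairs.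
  We compare a maximum likelihood partition with the reference partition \<open>(X \<union> U, Y \<union> V)\<close>, taken
  with rate \<open>1 / N\<close> inside the sides and a free rate across.

  If \<open>X\<close> and \<open>Y\<close> are not separated, at least \<open>r\<close> of the \<open>r\<^sup>2\<close> heavy \<open>X\<close>-\<open>Y\<close> pairs lie inside a
  side.  Bounding every block by \<open>C ln \<alpha> + C\<^sup>2 / (\<alpha> N) - 2 C\<close> and \<open>C\<^sup>2 / N\<close> by Cauchy--Schwarz, the
  heavy mass is spread over so many more pairs that the reference partition at cross rate \<open>\<alpha>\<close>
  does strictly better.  If \<open>X\<close> and \<open>Y\<close> are separated but \<open>t > 0\<close> of the pairs \<open>u\<^sub>i\<close>, \<open>v\<^sub>i\<close> lie
  inside a side, their \<open>t n \<alpha>\<close> parallel edges sit in within-side blocks much sparser than the cross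
  block.  Against the reference partition taken at the density of the cross block this costs at
  least \<open>4 t n \<alpha>\<close>, while the cross block is short of at most \<open>t n\<close> pairs, worth at most \<open>2 t n \<alpha>\<close>.\<close>

section \<open>Unordered pairs and edge counts\<close>

lemma upairs_commute: "upairs A B = upairs B A"
  unfolding upairs_def by (auto simp: insert_commute)

lemma upairs_mono: "A \<subseteq> A' \<Longrightarrow> B \<subseteq> B' \<Longrightarrow> upairs A B \<subseteq> upairs A' B'"
  unfolding upairs_def by blast

lemma finite_upairs: "finite A \<Longrightarrow> finite B \<Longrightarrow> finite (upairs A B)"
  by (rule finite_subset[of _ "(\<lambda>(a,b). {a,b}) ` (A \<times> B)"]) (auto simp: upairs_def)

lemma card_upairs_disjoint:
  assumes "finite A" "finite B" "A \<inter> B = {}"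
  shows "card (upairs A B) = card A * card B"
proof -
  have "upairs A B = (\<lambda>(a,b). {a,b}) ` (A \<times> B)"
    using assms(3) unfolding upairs_def by fastforce
  moreover have "inj_on (\<lambda>(a,b). {a,b}) (A \<times> B)"
    using assms(3) by (auto simp: inj_on_def doubleton_eq_iff)
  ultimately show ?thesis by (simp add: card_image card_cartesian_product)
qed

lemma card_upairs_self:
  assumes "finite A"
  shows "2 * real (card (upairs A A)) = real (card A) * (real (card A) - 1)"
proof -
  have "upairs A A = {S. S \<subseteq> A \<and> card S = 2}"
    unfolding upairs_def by (auto simp: card_2_iff)
  hence "card (upairs A A) = card A * (card A - 1) div 2"
    using assms by (simp add: n_subsets choose_two)
  moreover have "even (card A * (card A - 1))" by (cases "card A") auto
  ultimately have "2 * card (upairs A A) = card A * (card A - 1)" by simp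
  hence "real (2 * card (upairs A A)) = real (card A * (card A - 1))" by metis
  thus ?thesis by (cases "card A") (auto simp: algebra_simps)
qed

lemma card_upairs_self_ge:
  assumes "T \<subseteq> S" "finite S"
  shows "2 * real (card (upairs S S)) \<ge> real (card T) * (real (card T) - 1)"
proof -
  have "card (upairs T T) \<le> card (upairs S S)"
    using assms by (intro card_mono upairs_mono) (auto simp: finite_upairs)
  thus ?thesis using card_upairs_self[of T] assms finite_subset by fastforce
qed

lemma upairs_Un_self: "upairs (A \<union> B) (A \<union> B) = upairs A A \<union> upairs A B \<union> upairs B B"
  unfolding upairs_def by (auto simp: insert_commute)

lemma upairs_self_Int_cross: "A \<inter> B = {} \<Longrightarrow> upairs A A \<inter> upairs A B = {}"
  unfolding upairs_def by (auto simp: doubleton_eq_iff)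

lemma upairs_self_Int_self: "A \<inter> B = {} \<Longrightarrow> upairs A A \<inter> upairs B B = {}"
  unfolding upairs_def by (auto simp: doubleton_eq_iff)

lemma upairs_self_Int_upairs: "upairs S S \<inter> upairs X Y = upairs (S \<inter> X) (S \<inter> Y)"
  unfolding upairs_def by (auto simp: doubleton_eq_iff) blast+

lemma upairs_Int_upairs:
  "upairs S T \<inter> upairs X Y = upairs (S \<inter> X) (T \<inter> Y) \<union> upairs (S \<inter> Y) (T \<inter> X)"
  unfolding upairs_def by (auto simp: doubleton_eq_iff insert_commute) blast+

lemma upairs_Int_upairs_disjoint:
  "S \<inter> T = {} \<Longrightarrow> X \<inter> Y = {} \<Longrightarrow> upairs (S \<inter> X) (T \<inter> Y) \<inter> upairs (S \<inter> Y) (T \<inter> X) = {}"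
  unfolding upairs_def by (auto simp: doubleton_eq_iff)

lemma cnt_union: "cnt (M + N) e lo hi = cnt M e lo hi + cnt N e lo hi"
  unfolding cnt_def by simp

lemma cnt_empty: "cnt {#} e lo hi = 0"
  unfolding cnt_def by simp

lemma cnt_sum: "cnt (\<Sum>i\<in>I. f i) e lo hi = (\<Sum>i\<in>I. cnt (f i) e lo hi)"
  by (induction I rule: infinite_finite_induct) (simp_all add: cnt_empty cnt_union)

lemma cnt_add_mset:
  "cnt (add_mset (a,b,t) M) e lo hi = cnt M e lo hi + (if {a,b} = e \<and> lo \<le> t \<and> t \<le> hi then 1 else 0)"
  unfolding cnt_def by simp

lemma cnt_replicate_mset:
  "cnt (replicate_mset k (a,b,t)) e lo hi = (if {a,b} = e \<and> lo \<le> t \<and> t \<le> hi then k else 0)"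
  by (induction k) (auto simp: cnt_add_mset cnt_empty)

lemma sum_cnt_le_size: "finite S \<Longrightarrow> (\<Sum>e\<in>S. cnt M e lo hi) \<le> size M"
proof (induction M)
  case empty
  thus ?case by (simp add: cnt_empty)
next
  case (add x M)
  obtain a b t where x: "x = (a,b,t)" by (cases x) auto
  have "(\<Sum>e\<in>S. if {a,b} = e \<and> lo \<le> t \<and> t \<le> hi then 1 else 0::nat) \<le> (\<Sum>e\<in>S. if e = {a,b} then 1 else 0)"
    by (rule sum_mono) auto
  also have "\<dots> \<le> 1" using add.prems by (simp add: sum.delta')
  finally show ?case
    using add by (simp add: x cnt_add_mset sum.distrib)
qed

lemma sum_if_unique:
  assumes "finite I" "j \<in> I" "\<And>i. i \<in> I \<Longrightarrow> P i \<longleftrightarrow> i = j"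
  shows "(\<Sum>i\<in>I. if P i then k else (0::'a::comm_monoid_add)) = k"
proof -
  have "(\<Sum>i\<in>I. if P i then k else 0) = (\<Sum>i\<in>I. if i = j then k else 0)"
    by (rule sum.cong) (use assms in auto)
  thus ?thesis using assms by (simp add: sum.delta')
qed

section \<open>Profile likelihood\<close>

text \<open>The likelihood of a block with \<open>C\<close> edges on \<open>N\<close> pairs, maximised over the rate
  (attained at \<open>\<lambda> = C / N\<close>).\<close>
definition profile_ll :: "real \<Rightarrow> real \<Rightarrow> real" where
  "profile_ll C N = (if C = 0 then 0 else C * ln (C / N) - C)"

definition mass :: "'v tedges \<Rightarrow> 'v set set \<Rightarrow> nat" where
  "mass G S = (\<Sum>e\<in>S. cnt G e 0 1)"

lemma mass_Un: "finite S \<Longrightarrow> finite T \<Longrightarrow> S \<inter> T = {} \<Longrightarrow> mass G (S \<union> T) = mass G S + mass G T"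
  unfolding mass_def by (rule sum.union_disjoint)

lemma mass_pos_imp_card_pos: "finite S \<Longrightarrow> mass G S > 0 \<Longrightarrow> card S > 0"
  unfolding mass_def by (auto simp: card_gt_0_iff)

lemma ellAB_eq_of_pos:
  assumes "lam > 0"
  shows "ellAB G A B 0 1 lam = ereal (real (mass G (upairs A B)) * ln lam - lam * real (card (upairs A B)))"
proof -
  have "ellAB G A B 0 1 lam = ereal (\<Sum>e\<in>upairs A B. real (cnt G e 0 1) * ln lam - lam)"
    unfolding ellAB_def ell0_def using assms by (simp add: sum_ereal)
  thus ?thesis by (simp add: mass_def sum_subtractf sum_distrib_right)
qed

lemma linear_ln_le_profile:
  fixes C N lam :: real
  assumes "C > 0" "N > 0" "lam > 0"
  shows "C * ln lam - lam * N \<le> C * ln (C / N) - C"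
proof -
  define y where "y = lam * N / C"
  have "y > 0" using assms by (simp add: y_def)
  have "ln lam = ln (C / N) + ln y" using assms by (simp add: y_def ln_mult ln_div)
  moreover have "ln y \<le> y - 1" using \<open>y > 0\<close> by (rule ln_le_minus_one)
  ultimately have "C * ln lam \<le> C * ln (C / N) + C * (y - 1)"
    using assms by (simp add: distrib_left)
  also have "C * (y - 1) = lam * N - C" using assms by (simp add: y_def field_simps)
  finally show ?thesis by simp
qed

lemma ellAB_le_profile_ll:
  assumes "lam \<ge> 0" "finite (upairs A B)"
  shows "ellAB G A B 0 1 lam \<le> ereal (profile_ll (real (mass G (upairs A B))) (real (card (upairs A B))))"
proof (cases "mass G (upairs A B) = 0")
  case True
  hence "\<forall>e\<in>upairs A B. cnt G e 0 1 = 0" using assms(2) by (simp add: mass_def)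
  hence "ellAB G A B 0 1 lam \<le> 0"
    unfolding ellAB_def ell0_def using assms(1) by (intro sum_nonpos) auto
  thus ?thesis using True by (simp add: profile_ll_def zero_ereal_def)
next
  case False
  show ?thesis
  proof (cases "lam > 0")
    case True
    have "card (upairs A B) > 0" using False assms(2) mass_pos_imp_card_pos by blast
    thus ?thesis
      using False True linear_ln_le_profile[of "real (mass G (upairs A B))" "real (card (upairs A B))" lam]
      by (simp add: ellAB_eq_of_pos profile_ll_def)
  next
    case False
    hence lam0: "lam = 0" using assms(1) by simp
    obtain e where e: "e \<in> upairs A B" "cnt G e 0 1 \<noteq> 0"
      using \<open>mass G (upairs A B) \<noteq> 0\<close> unfolding mass_def by (metis sum.neutral)
    have rest: "(\<Sum>f\<in>upairs A B - {e}. ell0 (cnt G f 0 1) lam 1) \<le> 0"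
      by (rule sum_nonpos) (simp add: ell0_def lam0)
    have "ellAB G A B 0 1 lam = ell0 (cnt G e 0 1) lam 1 + (\<Sum>f\<in>upairs A B - {e}. ell0 (cnt G f 0 1) lam 1)"
      unfolding ellAB_def using e assms(2) by (simp add: sum.remove)
    also have "\<dots> = - \<infinity>"
      using e lam0 rest by (auto simp: ell0_def)
    finally show ?thesis by simp
  qed
qed

definition profile_LL :: "'v tedges \<Rightarrow> 'v set \<Rightarrow> 'v set \<Rightarrow> real" where
  "profile_LL G A B =
     profile_ll (real (mass G (upairs A A))) (real (card (upairs A A)))
   + profile_ll (real (mass G (upairs A B))) (real (card (upairs A B)))
   + profile_ll (real (mass G (upairs B B))) (real (card (upairs B B)))"

lemma LL_le_profile_LL:
  assumes "finite A" "finite B" "l11 \<ge> 0" "l12 \<ge> 0" "l22 \<ge> 0"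
  shows "LL G A B l11 l12 l22 \<le> ereal (profile_LL G A B)"
proof -
  have "LL G A B l11 l12 l22
     \<le> ereal (profile_ll (real (mass G (upairs A A))) (real (card (upairs A A))))
     + ereal (profile_ll (real (mass G (upairs A B))) (real (card (upairs A B))))
     + ereal (profile_ll (real (mass G (upairs B B))) (real (card (upairs B B))))"
    unfolding LL_def using assms
    by (intro add_mono ellAB_le_profile_ll) (auto simp: finite_upairs)
  thus ?thesis unfolding profile_LL_def by simp
qed

lemma LL_le_profile_LL_of_max_likelihood:
  assumes "is_ML_partition G N A B" "finite N" "is_partition2 N Q1 Q2"
    "m11 \<ge> 0" "m12 \<ge> 0" "m22 \<ge> 0"
  shows "LL G Q1 Q2 m11 m12 m22 \<le> ereal (profile_LL G A B)"
proof -
  obtain l11 l12 l22 where l: "l11 \<ge> 0" "l12 \<ge> 0" "l22 \<ge> 0"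
    and max: "LL G Q1 Q2 m11 m12 m22 \<le> LL G A B l11 l12 l22"
    using assms(1,3-) unfolding is_ML_partition_def by blast
  have "LL G A B l11 l12 l22 \<le> ereal (profile_LL G A B)"
    using assms(1,2) l unfolding is_ML_partition_def is_partition2_def
    by (intro LL_le_profile_LL) (auto intro: finite_subset)
  with max show ?thesis by (rule order_trans)
qed

lemma LL_commute: "LL G A B l11 l12 l22 = LL G B A l22 l12 l11"
  unfolding LL_def ellAB_def using upairs_commute[of A B] by (simp add: ac_simps)

lemma is_ML_partition_commute: "is_ML_partition G N A B \<Longrightarrow> is_ML_partition G N B A"
  unfolding is_ML_partition_def is_partition2_def
  by (simp add: LL_commute Un_commute Int_commute) (metis LL_commute)

lemma add_sq_divide_le:
  fixes x y M K :: real
  assumes "M \<ge> 0" "K \<ge> 0" "M = 0 \<Longrightarrow> x = 0" "K = 0 \<Longrightarrow> y = 0"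
  shows "(x + y)^2 / (M + K) \<le> x^2 / M + y^2 / K"
proof (cases "M = 0 \<or> K = 0")
  case True
  thus ?thesis using assms by auto
next
  case False
  hence MK: "M > 0" "K > 0" using assms by auto
  have "(x^2 * K + y^2 * M) * (M + K) - (x + y)^2 * (M * K) = (x*K - y*M)^2"
    by (simp add: power2_eq_square algebra_simps)
  hence "(x + y)^2 * (M * K) \<le> (x^2 * K + y^2 * M) * (M + K)"
    by (metis diff_ge_0_iff_ge zero_le_power2)
  thus ?thesis using MK by (simp add: field_simps)
qed

lemma profile_ll_le_quadratic:
  fixes C N a :: real
  assumes "C \<ge> 0" "N \<ge> 0" "C > 0 \<Longrightarrow> N > 0" "a > 0"
  shows "profile_ll C N \<le> C * ln a + C^2 / (a * N) - 2 * C"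
proof (cases "C = 0")
  case True
  thus ?thesis by (simp add: profile_ll_def)
next
  case False
  hence CN: "C > 0" "N > 0" using assms by auto
  hence y: "C / (a * N) > 0" using assms(4) by simp
  have "ln (C / N) = ln a + ln (C / (a * N))" using CN assms(4) by (simp add: ln_div ln_mult)
  also have "\<dots> \<le> ln a + (C / (a * N) - 1)" using ln_le_minus_one[OF y] by simp
  finally have "C * ln (C / N) \<le> C * (ln a + (C / (a * N) - 1))" using CN by (simp add: mult_left_mono)
  also have "\<dots> = C * ln a + C^2 / (a * N) - C" by (simp add: power2_eq_square algebra_simps)
  finally show ?thesis using False by (simp add: profile_ll_def)
qed

lemma ln_27_ge_3: "ln (27::real) \<ge> 3"
proof -
  have "exp (3::real) = exp 1 ^ 3" using exp_of_nat_mult[of 3 1] by simp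
  also have "\<dots> \<le> 3^3" using exp_le by (intro power_mono) auto
  finally show ?thesis by (simp add: ln_ge_iff)
qed

lemma profile_ll_le_sparse:
  fixes C N rate :: real
  assumes "C \<ge> 0" "N > 0" "rate > 0" "27 * C \<le> rate * N"
  shows "profile_ll C N \<le> C * ln rate - 4 * C"
proof (cases "C = 0")
  case True
  thus ?thesis by (simp add: profile_ll_def)
next
  case False
  hence C: "C > 0" using assms by simp
  have "ln (rate * N / C) \<ge> ln 27" using assms C by (subst ln_le_cancel_iff) (auto simp: field_simps)
  moreover have "ln (C / N) = ln rate - ln (rate * N / C)" using C assms by (simp add: ln_div ln_mult)
  ultimately have "ln (C / N) \<le> ln rate - 3" using ln_27_ge_3 by linarith
  hence "C * ln (C / N) \<le> C * (ln rate - 3)" using C by (simp add: mult_left_mono)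
  thus ?thesis using False by (simp add: profile_ll_def algebra_simps)
qed

lemma two_mul_ln_le_div_16:
  fixes al m X :: real
  assumes "al \<ge> 1" "2^20 * m^2 \<le> al" "m \<ge> 0" "0 < X" "X \<le> 4 * al^2"
  shows "2 * m * ln X \<le> al / 16"
proof -
  define s where "s = sqrt al"
  have s1: "s \<ge> 1" and als: "al = s^2" using assms(1) unfolding s_def by simp_all
  have "(1024 * m)^2 \<le> s^2" using assms(2) als by (simp add: power_mult_distrib)
  hence ms: "1024 * m \<le> s" by (rule power2_le_imp_le) (use s1 in simp)
  have ln4: "ln (4::real) \<le> 2"
    using ln_le_minus_one[of 2] ln_mult[of 2 2] by simp
  have "ln X \<le> ln (4 * al^2)" using assms(1,4,5) by (subst ln_le_cancel_iff) auto
  also have "\<dots> = ln 4 + 4 * ln s" using s1 als by (simp add: ln_mult ln_realpow)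
  also have "\<dots> \<le> 2 + 4 * (s - 1)" using ln4 ln_le_minus_one[of s] s1 by simp
  finally have lx: "ln X \<le> 4 * s" by simp
  show ?thesis
  proof (cases "ln X \<ge> 0")
    case True
    have "2 * m * ln X \<le> 2 * m * (4 * s)" using lx assms(3) by (intro mult_left_mono) auto
    also have "\<dots> \<le> 8 * (s / 1024 * s)" using ms s1 by (simp add: mult_right_mono)
    also have "\<dots> \<le> al / 16" using als by (simp add: power2_eq_square)
    finally show ?thesis .
  next
    case False
    hence "2 * m * ln X \<le> 0" using assms(3) by (simp add: mult_nonneg_nonpos)
    thus ?thesis using assms(1) by simp
  qed
qed

lemma red_r_bounds:
  fixes r n :: real
  assumes "r = 64 * (n + 1)^2" "n \<ge> 0"
  shows "r \<ge> 64" "r \<ge> 64 * n" "r \<ge> 64 * n^2" "(r + n)^2 \<le> 2 * r^2" "r^2 \<ge> 4096 * n^2" "r^2 \<ge> 4096"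
proof -
  have sq: "(n + 1)^2 = n^2 + 2*n + 1" by (simp add: power2_eq_square algebra_simps)
  have "n^2 \<ge> 0" by simp
  thus r1: "r \<ge> 64" and r2: "r \<ge> 64 * n" and r3: "r \<ge> 64 * n^2" using assms sq by linarith+
  have "(64 * n) * (64 * n) \<le> r * r" using r2 assms(2) by (intro mult_mono) auto
  thus nr: "r^2 \<ge> 4096 * n^2" by (simp add: power2_eq_square)
  have "64 * 64 \<le> r * r" using r1 by (intro mult_mono) auto
  thus "r^2 \<ge> 4096" by (simp add: power2_eq_square)
  have "(r + n)^2 = r^2 + 2 * (r * n) + n^2" by (simp add: power2_eq_square algebra_simps)
  moreover have "64 * (r * n) \<le> r^2" using r2 r1 by (simp add: mult_left_mono power2_eq_square)
  ultimately show "(r + n)^2 \<le> 2 * r^2" using nr zero_le_power2[of r] by linarith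
qed

text \<open>\<open>L\<close> stands for the at most \<open>2 m\<close> edges of the two copies of \<open>H\<^sub>0\<close>, negligible against \<open>\<alpha>\<close>.\<close>
lemma copy_edges_log_bound:
  fixes al m r n L N rate :: real
  assumes "al \<ge> 2^20 * m^2" "al \<ge> r^2" "r = 64 * (n + 1)^2" "n \<ge> 0" "m \<ge> 0"
    "0 \<le> L" "L \<le> 2 * m" "1 \<le> N" "N \<le> (r + n)^2" "1 \<le> rate" "rate \<le> 2 * al"
  shows "L * ln rate + L * ln N \<le> al / 16"
proof -
  note rb = red_r_bounds[OF assms(3,4)]
  have a1: "al \<ge> 1" using rb(6) assms(2) by linarith
  have "rate * N \<le> (2 * al) * (2 * r^2)"
    using assms(8-11) rb(4) by (intro mult_mono) auto
  also have "\<dots> \<le> (2 * al) * (2 * al)" using assms(2) a1 by (intro mult_left_mono) auto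
  finally have X: "rate * N \<le> 4 * al^2" by (simp add: power2_eq_square)
  have X1: "1 \<le> rate * N" using mult_mono[of 1 rate 1 N] assms(8,10) by simp
  have "L * ln (rate * N) \<le> 2 * m * ln (rate * N)"
    using assms(7) X1 by (intro mult_right_mono) auto
  also have "\<dots> \<le> al / 16" using two_mul_ln_le_div_16[OF a1 assms(1,5) _ X] X1 by simp
  finally show ?thesis using X1 assms(8,10) by (simp add: ln_mult distrib_left)
qed

lemma sq_product_div_pairs_le:
  fixes x y :: nat and M :: real
  assumes "2 * M \<ge> real (x + y) * (real (x + y) - 1)"
  shows "real (x * y)^2 / M \<le> 3/4 * real (x * y) + 1/4"
proof (cases "x * y = 0")
  case True
  thus ?thesis by auto
next
  case False
  hence x: "x \<ge> 1" "y \<ge> 1" by auto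
  hence "real (x + y) * (real (x + y) - 1) \<ge> 2 * 1" by (intro mult_mono) auto
  hence M: "M > 0" using assms by linarith
  define q where "q = real (x * y)"
  show ?thesis
  proof (cases "x + y = 2")
    case True
    hence "x = 1" "y = 1" using x by auto
    thus ?thesis using assms(1) by simp
  next
    case False
    define s where "s = real x + real y"
    have s3: "s \<ge> 3" using x False unfolding s_def by linarith
    have "4 * q \<le> s^2"
      using zero_le_power2[of "real x - real y"] unfolding q_def s_def
      by (simp add: power2_eq_square algebra_simps)
    also have "s^2 \<le> 3/2 * (s * (s - 1))"
      using mult_left_mono[of 3 s s] s3 by (simp add: power2_eq_square algebra_simps)
    finally have "q \<le> 3/4 * M" using assms(1) unfolding s_def by simp
    hence "q * q \<le> q * (3/4 * M)" by (rule mult_left_mono) (simp add: q_def)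
    hence "q^2 / M \<le> 3/4 * q" using M by (simp add: power2_eq_square field_simps)
    thus ?thesis unfolding q_def by linarith
  qed
qed

text \<open>Unless \<open>(x, y)\<close> is \<open>(r, 0)\<close> or \<open>(0, r)\<close>, i.e. unless one side contains all of \<open>X\<close> and
  none of \<open>Y\<close>, at least \<open>r\<close> of the \<open>X\<close>-\<open>Y\<close> pairs lie inside a side.\<close>
lemma same_side_products_ge:
  fixes x y r :: nat
  assumes "x \<le> r" "y \<le> r" "\<not> (x = r \<and> y = 0)" "\<not> (x = 0 \<and> y = r)"
  shows "x * y + (r - x) * (r - y) \<ge> r"
proof -
  consider "y = 0" | "x = 0" | "y = r" | "x = r" | "1 \<le> x \<and> x < r \<and> 1 \<le> y \<and> y < r"
    using assms by linarith
  thus ?thesis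
  proof cases
    case 5
    hence "1 \<le> r - y" by linarith
    hence "x * y \<ge> x" "(r - x) * (r - y) \<ge> r - x" using 5 by simp_all
    thus ?thesis using 5 by linarith
  next
    case 3
    thus ?thesis using assms by (cases x) auto
  next
    case 4
    thus ?thesis using assms by (cases y) auto
  qed (use assms in simp_all)
qed

lemma cross_count_mult_le:
  fixes q a b wa wb r n :: nat
  assumes "q \<le> r * a" "q \<le> r * b" "a + b = 2 * r" "wa + wb = 2 * n"
  shows "q * (r + 2 * n) \<le> r * (a * b + a * wb + b * wa)"
proof -
  have *: "q * (r + 2 * n) \<le> r * (a * b + a * wb + b * wa)"
    if "q \<le> r * a" "a \<le> b" "a + b = 2 * r" "wa + wb = 2 * n" for a b wa wb
  proof -
    have "r \<le> b" using that(2,3) by linarith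
    hence "a * (r + 2 * n) \<le> a * (b + 2 * n)" by simp
    also have "\<dots> = a * b + a * wb + a * wa"
      unfolding that(4)[symmetric] by (simp add: algebra_simps)
    also have "\<dots> \<le> a * b + a * wb + b * wa" using that(2) by (simp add: mult_right_mono)
    finally have "r * (a * (r + 2 * n)) \<le> r * (a * b + a * wb + b * wa)" by simp
    moreover have "q * (r + 2 * n) \<le> r * a * (r + 2 * n)" using that(1) by simp
    ultimately show ?thesis by linarith
  qed
  show ?thesis
  proof (cases "a \<le> b")
    case True
    thus ?thesis using *[of a b wa wb] assms by simp
  next
    case False
    hence "q * (r + 2 * n) \<le> r * (b * a + b * wa + a * wb)" using *[of b a wb wa] assms by simp
    thus ?thesis by (simp add: ac_simps)
  qed
qed

lemma cross_sq_div_le: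
  fixes q a b wa wb r n :: nat
  assumes "q \<le> r * a" "q \<le> r * b" "a + b = 2 * r" "wa + wb = 2 * n"
  shows "real q ^2 / real (a * b + a * wb + b * wa) \<le> real q * (real r / (real r + 2 * real n))"
proof (cases "q = 0")
  case True
  thus ?thesis by simp
next
  case False
  have key: "q * (r + 2 * n) \<le> r * (a * b + a * wb + b * wa)" by (rule cross_count_mult_le[OF assms])
  have r0: "r > 0" using assms(1) False by (cases r) auto
  define M where "M = real (a * b + a * wb + b * wa)"
  have M: "M > 0" unfolding M_def using key False r0 by (cases "a * b + a * wb + b * wa") auto
  have "real (q * (r + 2 * n)) \<le> real (r * (a * b + a * wb + b * wa))"
    using key by (simp only: of_nat_le_iff)
  hence "real q * (real r + 2 * real n) \<le> real r * M" unfolding M_def by simp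
  hence "real q * real q * (real r + 2 * real n) \<le> real q * (real r * M)"
    by (simp add: mult.assoc mult_left_mono)
  thus ?thesis using M r0 unfolding M_def[symmetric] by (simp add: power2_eq_square field_simps)
qed

lemma matched_sq_div_le:
  fixes p K :: nat and L B c :: real
  assumes "K \<ge> p^2" "0 \<le> L" "L \<le> B" "L > 0 \<Longrightarrow> K \<ge> 1" "c \<ge> 0"
  shows "(c * p + L)^2 / K \<le> (c + B)^2"
proof (cases "p = 0")
  case True
  show ?thesis
  proof (cases "L = 0")
    case False
    hence "real K \<ge> 1" using assms by simp
    hence "L^2 / K \<le> L^2" by (simp add: divide_le_eq mult_le_cancel_left1)
    also have "L^2 \<le> (c + B)^2" using assms by (intro power_mono) auto
    finally show ?thesis using True by simp
  qed (use True in simp)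
next
  case False
  hence p1: "real p \<ge> 1" by simp
  have Kp: "real K \<ge> (real p)^2" using assms(1) by (metis of_nat_le_iff of_nat_power)
  have p2: "(real p)^2 \<ge> 1" using p1 by (simp add: one_le_power)
  hence "(c * p + L)^2 / K \<le> (c * p + L)^2 / (real p)^2"
    using Kp by (intro divide_left_mono mult_pos_pos zero_le_power2) linarith+
  also have "\<dots> = (c + L / p)^2" using p1 by (simp add: power2_eq_square field_simps)
  also have "\<dots> \<le> (c + B)^2"
  proof -
    have "L / p \<le> L" using p1 assms(2) by (simp add: divide_le_eq mult_le_cancel_left1)
    thus ?thesis using assms by (intro power_mono) auto
  qed
  finally show ?thesis .
qed

lemma XY_spread_bound:
  fixes R N q :: real
  assumes "R = 64 * (N + 1)^2" "N \<ge> 0" "R \<le> q"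
  shows "(R^2 - q) * (R / (R + 2 * N)) + 3/4 * q + 1/2 \<le> (R - N)^2 - 3 * N^2 - 2"
proof -
  note rb = red_r_bounds[OF assms(1,2)]
  have pos: "R + 2 * N > 0" using rb(1) assms(2) by simp
  define rho where "rho = R / (R + 2 * N)"
  have rho34: "rho \<ge> 3/4" unfolding rho_def using pos rb(2) by (simp add: field_simps)
  have "q * (rho - 3/4) \<ge> R * (rho - 3/4)" using assms(3) rho34 by (intro mult_right_mono) auto
  hence c1: "(R^2 - q) * rho + 3/4 * q \<le> (R^2 - R) * rho + 3/4 * R" by (simp add: algebra_simps)
  have big: "R^3 - R^2 + (3 * R / 4 + 1/2) * (R + 2 * N) \<le> ((R - N)^2 - 3 * N^2 - 2) * (R + 2 * N)"
  proof -
    have e: "((R - N)^2 - 3 * N^2 - 2) * (R + 2 * N) - (R^3 - R^2 + (3 * R / 4 + 1/2) * (R + 2 * N))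
          = R^2 / 4 - 6 * R * N^2 - 3 * R * N / 2 - 5 * R / 2 - 4 * N^3 - 5 * N"
      by (simp add: power2_eq_square power3_eq_cube algebra_simps)
    have "R^2 / 4 = 16 * R * N^2 + 32 * R * N + 16 * R" using assms(1) by (simp add: power2_eq_square algebra_simps)
    moreover have "R * N^2 \<ge> 0" "R * N \<ge> 0" using rb(1) assms(2) by simp_all
    moreover have "R * N \<ge> 64 * N" using rb(1) assms(2) by (simp add: mult_right_mono)
    moreover have "R * N \<ge> 64 * N^2 * N" using rb(3) assms(2) by (simp add: mult_right_mono)
    moreover have "N^3 = N^2 * N" by (simp add: power3_eq_cube power2_eq_square)
    ultimately show ?thesis using e rb(1) by linarith
  qed
  have "(R^2 - R) * rho + 3/4 * R + 1/2 = (R^3 - R^2 + (3 * R / 4 + 1/2) * (R + 2 * N)) / (R + 2 * N)"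
    using pos unfolding rho_def by (simp add: power2_eq_square power3_eq_cube field_simps)
  also have "\<dots> \<le> (R - N)^2 - 3 * N^2 - 2" using big pos by (simp add: divide_le_eq)
  finally show ?thesis using c1 unfolding rho_def by linarith
qed

lemma unseparated_bound:
  fixes al m r n L N Q P H :: real
  assumes "al \<ge> 2^20 * m^2" "al \<ge> r^2" "r = 64 * (n + 1)^2" "n \<ge> 0" "n \<le> m"
    "0 \<le> L" "L \<le> 2 * m" "1 \<le> N" "N \<le> (r + n)^2" "H = (r^2 + n^2) * al"
    "Q \<le> al^2 * ((r - n)^2 - 3 * n^2 - 2) + 3 * (n * al + 2 * m)^2"
    "P \<le> (H + L) * ln al + Q / al - 2 * (H + L)"
  shows "P < H * ln al - al * (r + n)^2 - L * ln N - 2"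
proof -
  note rb = red_r_bounds[OF assms(3,4)]
  have m0: "m \<ge> 0" using assms(4,5) by linarith
  have al4: "al \<ge> 4096" using rb(6) assms(2) by linarith
  have m2: "m^2 \<le> al / 1048576" using assms(1) by simp
  have nm: "n * m \<le> m^2" using assms(4,5) by (simp add: power2_eq_square mult_right_mono)
  have "(n * al + 2 * m)^2 / al = n^2 * al + 4 * (n * m) + 4 * m^2 / al"
    using al4 by (simp add: power2_eq_square field_simps)
  moreover have "4 * m^2 / al \<le> 1" using m2 al4 by (simp add: field_simps)
  moreover have "Q / al \<le> (al^2 * ((r - n)^2 - 3 * n^2 - 2) + 3 * (n * al + 2 * m)^2) / al"
    using assms(11) al4 by (simp add: divide_right_mono)
  moreover have "\<dots> = al * ((r - n)^2 - 3 * n^2 - 2) + 3 * ((n * al + 2 * m)^2 / al)"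
    using al4 by (simp add: add_divide_distrib power2_eq_square)
  ultimately have "Q / al \<le> al * (r - n)^2 - 2 * al + 12 * (n * m) + 3"
    by (simp add: algebra_simps)
  moreover have "12 * (n * m) \<le> al / 1000" using nm m2 al4 by linarith
  moreover have "L * ln al + L * ln N \<le> al / 16"
    using copy_edges_log_bound[OF assms(1-3,4) m0 assms(6-9)] al4 by simp
  moreover have "2 * H = al * (r + n)^2 + al * (r - n)^2"
    using assms(10) by (simp add: power2_eq_square algebra_simps)
  ultimately show ?thesis using assms(6,12) al4 by (simp add: algebra_simps)
qed

text \<open>A within-side block has density at most \<open>rate / 27\<close>, which costs at least \<open>C ln 27 \<ge> 3 C\<close>
  against the value \<open>C ln rate - C\<close> at matching density.\<close>
lemma separated_within_le:
  fixes al r n rate C N :: real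
  assumes "r = 64 * (n + 1)^2" "n \<ge> 0" "al \<ge> 1" "rate \<ge> al / 2"
    "0 \<le> C" "C \<le> 2 * n^2 * al" "2 * N \<ge> r * (r - 1)"
  shows "profile_ll C N \<le> C * ln rate - 4 * C"
proof -
  note rb = red_r_bounds[OF assms(1,2)]
  have "2 * r \<le> r * r" using rb(1) by (intro mult_right_mono) auto
  hence rr: "r * (r - 1) \<ge> r^2 / 2" by (simp add: power2_eq_square algebra_simps)
  have "27 * C \<le> 54 * (n^2 * al)" using assms(6) by (simp add: mult_ac)
  also have "\<dots> \<le> al / 2 * (r^2 / 4)"
  proof -
    have "432 * n^2 \<le> r^2" using rb(5) zero_le_power2[of n] by linarith
    hence "432 * n^2 * al \<le> r^2 * al" using assms(3) by (intro mult_right_mono) auto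
    thus ?thesis by (simp add: algebra_simps)
  qed
  also have "\<dots> \<le> rate * N"
    using assms(3,4,7) rr rb(6) by (intro mult_mono) auto
  finally show ?thesis
    using assms(4,5,7) rr rb(6) assms(3) by (intro profile_ll_le_sparse) auto
qed

lemma separated_mass_bounds:
  fixes al m r n L H Cc CA CB :: real
  assumes "al \<ge> 2^20 * m^2" "al \<ge> r^2" "r = 64 * (n + 1)^2" "n \<ge> 1" "L \<le> 2 * m"
    "H = (r^2 + n^2) * al" "CA + CB + Cc = H + L" "Cc \<ge> r^2 * al" "CA \<ge> 0" "CB \<ge> 0"
  shows "Cc \<le> 2 * al * r^2" "CA \<le> 2 * n^2 * al" "CB \<le> 2 * n^2 * al"
proof -
  have "n \<ge> 0" using assms(4) by simp
  note rb = red_r_bounds[OF assms(3) this]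
  have al4: "al \<ge> 4096" using rb(6) assms(2) by linarith
  have m2: "2 * m \<le> al"
  proof (cases "m \<le> 1")
    case False
    hence "m \<le> m^2" by (simp add: power2_eq_square)
    moreover have "1048576 * m^2 \<le> al" using assms(1) by simp
    ultimately show ?thesis using False by linarith
  qed (use al4 in linarith)
  have "1 \<le> n^2" using assms(4) by (simp add: one_le_power)
  hence nal: "al \<le> n^2 * al" using mult_right_mono[of 1 "n^2" al] al4 by simp
  have "4096 * (n^2 * al) \<le> r^2 * al"
    using mult_right_mono[OF rb(5), of al] assms(4) al4 by (simp add: algebra_simps)
  moreover have "4096 * al \<le> r^2 * al" using mult_right_mono[OF rb(6), of al] assms(4) al4 by simp
  moreover have H: "H = r^2 * al + n^2 * al" using assms(6) by (simp add: algebra_simps)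
  ultimately have "Cc \<le> 2 * (r^2 * al)" using assms(5,7,9,10) m2 nal al4 by linarith
  thus "Cc \<le> 2 * al * r^2" by (simp add: mult_ac)
  show "CA \<le> 2 * n^2 * al" "CB \<le> 2 * n^2 * al" using H assms(5,7-10) m2 nal by linarith+
qed

text \<open>The cross block is evaluated at its own density \<open>rate = Cc / Nc\<close>; compared with the reference
  partition it misses \<open>(r + n)\<^sup>2 - Nc \<le> t n\<close> pairs at that rate but loses \<open>4 (CA + CB) \<ge> 4 t n \<alpha>\<close>
  on the within-side blocks.\<close>
lemma separated_bound:
  fixes al m r n L N H Cc Nc CA CB NA NB t :: real
  assumes "al \<ge> 2^20 * m^2" "al \<ge> r^2" "r = 64 * (n + 1)^2" "n \<ge> 1" "m \<ge> 0"
    "0 \<le> L" "L \<le> 2 * m" "1 \<le> N" "N \<le> (r + n)^2" "H = (r^2 + n^2) * al"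
    "CA + CB + Cc = H + L" "Cc \<ge> r^2 * al" "Nc \<ge> r^2" "Nc \<le> (r + n)^2"
    "(r + n)^2 - Nc \<le> t * n" "t \<ge> 1" "CA + CB \<ge> t * n * al"
    "CA \<ge> 0" "CB \<ge> 0" "2 * NA \<ge> r * (r - 1)" "2 * NB \<ge> r * (r - 1)"
  shows "profile_ll Cc Nc + profile_ll CA NA + profile_ll CB NB
    < H * ln (Cc / Nc) - (Cc / Nc) * (r + n)^2 - L * ln N - 2"
proof -
  have n0: "n \<ge> 0" using assms(4) by simp
  note rb = red_r_bounds[OF assms(3) n0]
  note masses = separated_mass_bounds[OF assms(1-4,7,10-12,18,19)]
  have al4: "al \<ge> 4096" using rb(6) assms(2) by linarith
  have Nc0: "Nc > 0" using assms(13) rb(6) by linarith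
  define rate where "rate = Cc / Nc"
  have "al / 2 * Nc \<le> al / 2 * (2 * r^2)" using assms(14) rb(4) al4 by (intro mult_left_mono) auto
  also have "\<dots> \<le> Cc" using assms(12) by (simp add: mult.commute)
  finally have rate_lo: "rate \<ge> al / 2" unfolding rate_def using Nc0 by (simp add: le_divide_eq)
  have "Cc \<le> 2 * al * Nc" using masses(1) mult_left_mono[OF assms(13), of "2 * al"] al4 by linarith
  hence rate_hi: "rate \<le> 2 * al" unfolding rate_def using Nc0 by (simp add: divide_le_eq)
  have within: "profile_ll CA NA + profile_ll CB NB \<le> (CA + CB) * ln rate - 4 * (CA + CB)"
    using separated_within_le[OF assms(3) n0 _ rate_lo assms(18) masses(2) assms(20)]
      separated_within_le[OF assms(3) n0 _ rate_lo assms(19) masses(3) assms(21)] al4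
    by (simp add: algebra_simps)
  have cross: "profile_ll Cc Nc = Cc * ln rate - Cc"
    using assms(12) rb(6) al4 unfolding profile_ll_def rate_def by (auto simp: mult_pos_pos)
  define T where "T = t * n * al"
  have "rate * ((r + n)^2 - Nc) \<le> (2 * al) * (t * n)"
    using rate_hi rate_lo assms(14,15) al4 by (intro mult_mono) auto
  moreover have "rate * Nc = Cc" unfolding rate_def using Nc0 by simp
  ultimately have missing: "rate * (r + n)^2 \<le> Cc + 2 * T" by (simp add: T_def algebra_simps)
  have copies: "L * ln rate + L * ln N \<le> al / 16"
    using copy_edges_log_bound[OF assms(1-3) n0 assms(5-9) _ rate_hi] rate_lo al4 by simp
  have "T \<ge> al"
    using mult_right_mono[of 1 "t * n" al] mult_mono[of 1 t 1 n] assms(4,16) al4 by (simp add: T_def)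
  moreover have "T \<le> CA + CB" using assms(17) unfolding T_def .
  ultimately have gap: "2 * T + al / 16 + 2 < 4 * (CA + CB)" using al4 by argo
  have "H * ln rate = (CA + CB) * ln rate + Cc * ln rate - L * ln rate"
    using arg_cong[OF assms(11), of "\<lambda>x. x * ln rate"] by (simp add: algebra_simps)
  hence "profile_ll Cc Nc + profile_ll CA NA + profile_ll CB NB
      < H * ln rate - rate * (r + n)^2 - L * ln N - 2"
    using within cross missing copies gap by linarith
  thus ?thesis unfolding rate_def by simp
qed

section \<open>The reduction graph\<close>

locale reduction =
  fixes n :: nat and E :: "nat \<Rightarrow> nat \<Rightarrow> bool"
begin

definition m :: nat where "m = card (sedges n E)"

abbreviation r :: nat where "r \<equiv> red_r n"
abbreviation \<alpha> :: nat where "\<alpha> \<equiv> red_alpha n m"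
abbreviation G :: "gnode tedges" where "G \<equiv> red_graph n E"
abbreviation nodes :: "gnode set" where "nodes \<equiv> red_nodes n"
abbreviation X :: "gnode set" where "X \<equiv> NX ` {..<r}"
abbreviation Y :: "gnode set" where "Y \<equiv> NY ` {..<r}"
abbreviation U :: "gnode set" where "U \<equiv> NU ` {..<n}"
abbreviation V :: "gnode set" where "V \<equiv> NV ` {..<n}"
abbreviation W :: "gnode set" where "W \<equiv> U \<union> V"

lemma alpha_pos: "real \<alpha> > 0"
proof -
  have "0 < r ^ 2" unfolding red_r_def by simp
  moreover have "r ^ 2 \<le> \<alpha>" unfolding red_alpha_def by simp
  ultimately have "0 < \<alpha>" by (rule less_le_trans)
  thus ?thesis by simp
qed

lemma real_alpha_ge: "real \<alpha> \<ge> 2^20 * (real m)^2" "real \<alpha> \<ge> (real r)^2"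
  unfolding red_alpha_def by (simp_all flip: of_nat_power of_nat_mult)

lemma real_r_eq: "real r = 64 * (real n + 1)^2"
  unfolding red_r_def by simp

definition copy_edges :: "gnode tedges" where
  "copy_edges = (\<Sum>(i,j)\<in>sedges n E. {#(NU i, NU j, 1), (NV i, NV j, 1)#})"

definition copy_cnt :: "gnode set \<Rightarrow> nat" where
  "copy_cnt e = cnt copy_edges e 0 1"

definition matching_pairs :: "gnode set set" where
  "matching_pairs = (\<lambda>i. {NU i, NV i}) ` {..<n}"

definition XY_pairs :: "gnode set set" where
  "XY_pairs = upairs X Y"

lemma sum_copy_cnt_le:
  assumes "finite S"
  shows "(\<Sum>e\<in>S. copy_cnt e) \<le> 2 * m"
proof -
  have "size copy_edges = 2 * m"
    unfolding copy_edges_def m_def by (simp add: case_prod_beta)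
  thus ?thesis unfolding copy_cnt_def using sum_cnt_le_size[OF assms, of copy_edges 0 1] by simp
qed

lemma copy_cnt_nonzero_cases: "copy_cnt e \<noteq> 0 \<Longrightarrow> \<exists>i j. e = {NU i, NU j} \<or> e = {NV i, NV j}"
proof (rule ccontr)
  assume "copy_cnt e \<noteq> 0" and e: "\<not> (\<exists>i j. e = {NU i, NU j} \<or> e = {NV i, NV j})"
  have "copy_cnt e = (\<Sum>(i,j)\<in>sedges n E. cnt {#(NU i, NU j, 1::real), (NV i, NV j, 1)#} e 0 1)"
    unfolding copy_cnt_def copy_edges_def by (simp add: cnt_sum case_prod_beta)
  also have "\<dots> = 0"
    by (rule sum.neutral) (use e in \<open>auto simp: cnt_add_mset cnt_empty\<close>, blast+)
  finally show False using \<open>copy_cnt e \<noteq> 0\<close> by simp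
qed

lemma cnt_red_graph:
  "cnt G e 0 1 = copy_cnt e + (if e \<in> matching_pairs then n * \<alpha> else 0) + (if e \<in> XY_pairs then \<alpha> else 0)"
proof -
  have matched: "(\<Sum>i<n. cnt (replicate_mset (n * \<alpha>) (NU i, NV i, 0)) e 0 1)
      = (if e \<in> matching_pairs then n * \<alpha> else 0)"
  proof (cases "e \<in> matching_pairs")
    case True
    then obtain i0 where "i0 < n" "e = {NU i0, NV i0}" unfolding matching_pairs_def by auto
    thus ?thesis using True
      by (simp add: cnt_replicate_mset, subst sum_if_unique[where j = i0]) (auto simp: doubleton_eq_iff)
  next
    case False
    hence "\<forall>i<n. {NU i, NV i} \<noteq> e" unfolding matching_pairs_def by auto
    thus ?thesis using False by (simp add: cnt_replicate_mset)
  qed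
  have XY: "(\<Sum>p\<in>{..<r} \<times> {..<r}. cnt ((\<lambda>(x,y). replicate_mset \<alpha> (NX x, NY y, 0)) p) e 0 1)
      = (if e \<in> XY_pairs then \<alpha> else 0)"
  proof -
    have "(\<Sum>p\<in>{..<r} \<times> {..<r}. cnt ((\<lambda>(x,y). replicate_mset \<alpha> (NX x, NY y, 0)) p) e 0 1)
        = (\<Sum>p\<in>{..<r} \<times> {..<r}. if {NX (fst p), NY (snd p)} = e then \<alpha> else 0)"
      by (rule sum.cong) (simp_all add: cnt_replicate_mset split_beta)
    also have "\<dots> = (if e \<in> XY_pairs then \<alpha> else 0)"
    proof (cases "e \<in> XY_pairs")
      case True
      then obtain x0 y0 where "x0 < r" "y0 < r" "e = {NX x0, NY y0}"
        unfolding XY_pairs_def upairs_def by auto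
      thus ?thesis using True
        by (subst sum_if_unique[where j = "(x0, y0)"]) (auto simp: doubleton_eq_iff)
    next
      case False
      hence "\<forall>x<r. \<forall>y<r. {NX x, NY y} \<noteq> e" unfolding XY_pairs_def upairs_def by blast
      thus ?thesis using False by (simp add: sum.neutral)
    qed
    finally show ?thesis .
  qed
  show ?thesis
    unfolding red_graph_def Let_def m_def[symmetric] copy_edges_def[symmetric] cnt_union cnt_sum
      copy_cnt_def[symmetric] using matched XY by (simp only:)
qed

lemma mass_red_graph:
  "finite S \<Longrightarrow> mass G S = (\<Sum>e\<in>S. copy_cnt e) + n * \<alpha> * card (S \<inter> matching_pairs) + \<alpha> * card (S \<inter> XY_pairs)"
  unfolding mass_def cnt_red_graph by (simp add: sum.distrib sum.If_cases Int_def)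

lemma finite_nodes: "finite nodes"
  unfolding red_nodes_def by simp

lemma card_X: "card X = r" and card_Y: "card Y = r" and card_U: "card U = n" and card_V: "card V = n"
  by (simp_all add: card_image inj_on_def)

lemma card_W: "card W = 2 * n"
  by (subst card_Un_disjoint) (auto simp: card_U card_V)

lemma card_matching_pairs: "card matching_pairs = n"
  unfolding matching_pairs_def by (subst card_image) (auto simp: inj_on_def doubleton_eq_iff)

lemma card_XY_pairs: "card XY_pairs = r * r"
  unfolding XY_pairs_def by (subst card_upairs_disjoint) (auto simp: card_X card_Y)

lemma matching_pairs_subset: "matching_pairs \<subseteq> upairs U V"
  unfolding matching_pairs_def upairs_def by auto

lemma XY_pairs_Int_W: "XY_pairs \<inter> upairs W W = {}"
  unfolding XY_pairs_def upairs_def by (auto simp: doubleton_eq_iff)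

lemma copy_cnt_outside_W:
  assumes "e \<in> upairs nodes nodes" "e \<notin> upairs W W"
  shows "copy_cnt e = 0"
proof (rule ccontr)
  assume "copy_cnt e \<noteq> 0"
  then obtain i j where ij: "e = {NU i, NU j} \<or> e = {NV i, NV j}" using copy_cnt_nonzero_cases by blast
  obtain a b where ab: "e = {a, b}" "a \<in> nodes" "b \<in> nodes" "a \<noteq> b"
    using assms(1) unfolding upairs_def by auto
  have "a \<in> W" "b \<in> W" using ij ab unfolding red_nodes_def by (auto simp: doubleton_eq_iff)
  thus False using ab assms(2) unfolding upairs_def by auto
qed

lemma copy_cnt_UV: "e \<in> upairs U V \<Longrightarrow> copy_cnt e = 0"
  using copy_cnt_nonzero_cases unfolding upairs_def by (auto simp: doubleton_eq_iff)

definition copy_mass :: nat where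
  "copy_mass = (\<Sum>e\<in>upairs nodes nodes. copy_cnt e)"

lemma copy_mass_le: "copy_mass \<le> 2 * m"
  unfolding copy_mass_def by (rule sum_copy_cnt_le) (simp add: finite_upairs finite_nodes)

lemma block_masses_sum:
  assumes "is_partition2 nodes A B"
  shows "mass G (upairs A A) + mass G (upairs A B) + mass G (upairs B B) = copy_mass + n * \<alpha> * n + \<alpha> * (r * r)"
proof -
  have AB: "A \<inter> B = {}" "A \<union> B = nodes" using assms unfolding is_partition2_def by auto
  hence fin: "finite A" "finite B" using finite_nodes by (metis finite_Un)+
  have "matching_pairs \<subseteq> upairs nodes nodes" "XY_pairs \<subseteq> upairs nodes nodes"
    using matching_pairs_subset upairs_mono[of U nodes V nodes] upairs_mono[of X nodes Y nodes]
    unfolding XY_pairs_def red_nodes_def by auto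
  hence "mass G (upairs nodes nodes) = copy_mass + n * \<alpha> * n + \<alpha> * (r * r)"
    by (simp add: mass_red_graph finite_upairs finite_nodes copy_mass_def card_matching_pairs
        card_XY_pairs Int_absorb1)
  moreover have "upairs nodes nodes = upairs A A \<union> upairs A B \<union> upairs B B"
    using AB(2) upairs_Un_self by metis
  moreover have "(upairs A A \<union> upairs A B) \<inter> upairs B B = {}"
    using upairs_self_Int_self[OF AB(1)] upairs_self_Int_cross[of B A] AB(1) upairs_commute[of A B] by auto
  ultimately show ?thesis
    using upairs_self_Int_cross[OF AB(1)] fin by (simp add: mass_Un finite_upairs)
qed

section \<open>The reference partition\<close>

abbreviation ref1 :: "gnode set" where "ref1 \<equiv> X \<union> U"
abbreviation ref2 :: "gnode set" where "ref2 \<equiv> Y \<union> V"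
abbreviation ref_pairs :: nat where "ref_pairs \<equiv> card (upairs ref1 ref1)"

lemma ref_is_partition: "is_partition2 nodes ref1 ref2"
  unfolding is_partition2_def red_nodes_def by auto

lemma card_ref: "card ref1 = r + n" "card ref2 = r + n"
  by (subst card_Un_disjoint; auto simp: card_X card_Y card_U card_V)+

lemma card_ref_within:
  "2 * real (card (upairs ref1 ref1)) = real (r + n) * (real (r + n) - 1)"
  "2 * real (card (upairs ref2 ref2)) = real (r + n) * (real (r + n) - 1)"
  using card_upairs_self[of ref1] card_upairs_self[of ref2] card_ref by auto

lemma ref_pairs_bounds: "1 \<le> real ref_pairs" "real ref_pairs \<le> (real r + real n)^2"
proof -
  define s where "s = real (r + n)"
  have "r \<ge> 64" unfolding red_r_def by simp
  hence s64: "s \<ge> 64" unfolding s_def by simp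
  have e: "2 * real ref_pairs = s * (s - 1)" using card_ref_within(1) unfolding s_def .
  have "s * 2 \<le> s * (s - 1)" using s64 by (intro mult_left_mono) auto
  thus "1 \<le> real ref_pairs" using e s64 by linarith
  have "s * (s - 1) \<le> s * s" using s64 by (intro mult_left_mono) auto
  hence "real ref_pairs \<le> s * s" using e \<open>s * 2 \<le> s * (s - 1)\<close> s64 by linarith
  thus "real ref_pairs \<le> (real r + real n)^2" unfolding s_def by (simp add: power2_eq_square)
qed

lemma mass_ref_cross: "mass G (upairs ref1 ref2) = n * \<alpha> * n + \<alpha> * (r * r)"
proof -
  have "copy_cnt e = 0" if "e \<in> upairs ref1 ref2" for e
  proof (cases "e \<in> upairs W W")
    case True
    hence "e \<in> upairs U V" using that unfolding upairs_def by (auto simp: doubleton_eq_iff)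
    thus ?thesis by (rule copy_cnt_UV)
  next
    case False
    have "e \<in> upairs nodes nodes" using that upairs_mono[of ref1 nodes ref2 nodes] unfolding red_nodes_def by auto
    thus ?thesis using False by (rule copy_cnt_outside_W)
  qed
  moreover have "upairs ref1 ref2 \<inter> matching_pairs = matching_pairs"
    using matching_pairs_subset upairs_mono[of U ref1 V ref2] by auto
  moreover have "upairs ref1 ref2 \<inter> XY_pairs = XY_pairs"
    unfolding XY_pairs_def using upairs_mono[of X ref1 Y ref2] by auto
  ultimately show ?thesis by (simp add: mass_red_graph finite_upairs card_matching_pairs card_XY_pairs)
qed

text \<open>The likelihood of the reference partition with rate \<open>1 / N\<close> inside the sides: a within block of
  mass \<open>C\<close> contributes \<open>- C ln N - 1\<close>, and the two within masses add up to \<open>copy_mass\<close>.\<close>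
definition ref_value :: "real \<Rightarrow> real" where
  "ref_value rate = real (n * \<alpha> * n + \<alpha> * (r * r)) * ln rate - rate * real ((r + n) * (r + n))
     - real copy_mass * ln (real ref_pairs) - 2"

lemma LL_ref:
  assumes "rate > 0"
  shows "LL G ref1 ref2 (1 / real ref_pairs) rate (1 / real ref_pairs) = ereal (ref_value rate)"
proof -
  have N: "real ref_pairs > 0" "card (upairs ref2 ref2) = ref_pairs"
    using ref_pairs_bounds(1) card_ref_within by auto
  have "real (mass G (upairs ref1 ref1)) + real (mass G (upairs ref2 ref2)) = real copy_mass"
    using block_masses_sum[OF ref_is_partition] mass_ref_cross by (simp flip: of_nat_add)
  moreover have "x * ln (1 / real ref_pairs) + y * ln (1 / real ref_pairs) = - ((x + y) * ln (real ref_pairs))"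
    for x y :: real
    using N by (simp add: ln_div algebra_simps)
  ultimately have "real (mass G (upairs ref1 ref1)) * ln (1 / real ref_pairs)
       + real (mass G (upairs ref2 ref2)) * ln (1 / real ref_pairs) = - (real copy_mass * ln (real ref_pairs))"
    by simp
  moreover have "card (upairs ref1 ref2) = (r + n) * (r + n)"
    by (subst card_upairs_disjoint) (auto simp: card_ref)
  ultimately show ?thesis
    unfolding LL_def ref_value_def using assms N mass_ref_cross
    by (simp add: ellAB_eq_of_pos algebra_simps)
qed

lemma ref_value_le_profile_LL:
  assumes "is_ML_partition G nodes A B" "rate > 0"
  shows "ref_value rate \<le> profile_LL G A B"
proof -
  have "LL G ref1 ref2 (1 / real ref_pairs) rate (1 / real ref_pairs) \<le> ereal (profile_LL G A B)"
    using assms by (intro LL_le_profile_LL_of_max_likelihood[OF assms(1) finite_nodes ref_is_partition]) auto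
  thus ?thesis using LL_ref[OF assms(2)] by simp
qed

section \<open>Partitions that do not separate \<open>X\<close> from \<open>Y\<close>\<close>

lemma partition_card_split:
  assumes "is_partition2 nodes A B" "S \<subseteq> nodes"
  shows "card (A \<inter> S) + card (B \<inter> S) = card S"
proof -
  have "finite S" using assms(2) finite_nodes finite_subset by blast
  moreover have "S = (A \<inter> S) \<union> (B \<inter> S)" "(A \<inter> S) \<inter> (B \<inter> S) = {}"
    using assms unfolding is_partition2_def by auto
  ultimately show ?thesis by (metis card_Un_disjoint finite_Int inf_commute)
qed

text \<open>If \<open>p\<close> of the pairs \<open>{u\<^sub>i, v\<^sub>i}\<close> join \<open>S\<close> to \<open>T\<close>, then choosing the \<open>S\<close>-end of one and the
  \<open>T\<close>-end of another gives \<open>p\<^sup>2\<close> distinct pairs between \<open>S\<close> and \<open>T\<close>.\<close>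
lemma card_matching_pairs_sq_le:
  assumes "finite (upairs S T)"
  shows "card (upairs S T \<inter> matching_pairs)^2 \<le> card (upairs S T)"
proof -
  define I where "I = {i. i < n \<and> {NU i, NV i} \<in> upairs S T}"
  have "upairs S T \<inter> matching_pairs = (\<lambda>i. {NU i, NV i}) ` I"
    unfolding I_def matching_pairs_def by auto
  hence cI: "card (upairs S T \<inter> matching_pairs) = card I"
    by (simp add: card_image inj_on_def doubleton_eq_iff)
  define s where "s i = (if NU i \<in> S \<and> NV i \<in> T then NU i else NV i)" for i
  define t where "t i = (if NU i \<in> S \<and> NV i \<in> T then NV i else NU i)" for i
  define idx :: "gnode \<Rightarrow> nat" where "idx = case_gnode id id id id"
  have ends: "s i \<in> S" "t i \<in> T" if "i \<in> I" for i
    using that unfolding I_def s_def t_def upairs_def by (auto simp: doubleton_eq_iff)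
  have idx: "idx (s i) = i" "idx (t i) = i" "s i \<noteq> t i" for i
    unfolding s_def t_def idx_def by auto
  define f where "f p = {s (fst p), t (snd p)}" for p
  have "f ` (I \<times> I) \<subseteq> upairs S T"
  proof
    fix x assume "x \<in> f ` (I \<times> I)"
    then obtain i j where ij: "i \<in> I" "j \<in> I" "x = {s i, t j}" unfolding f_def by auto
    have "s i \<noteq> t j" using idx by metis
    thus "x \<in> upairs S T" using ij ends unfolding upairs_def by blast
  qed
  moreover have "inj_on f (I \<times> I)"
  proof (rule inj_onI)
    fix p q assume "f p = f q"
    hence "s (fst p) = s (fst q) \<and> t (snd p) = t (snd q) \<or> s (fst p) = t (snd q) \<and> t (snd p) = s (fst q)"
      unfolding f_def by (auto simp: doubleton_eq_iff)
    moreover have "\<not> (s (fst p) = t (snd q) \<and> t (snd p) = s (fst q))"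
      using idx by (metis (no_types))
    ultimately have "fst p = fst q" "snd p = snd q" using idx by metis+
    thus "p = q" by (simp add: prod_eq_iff)
  qed
  ultimately have "card (I \<times> I) \<le> card (upairs S T)" using card_inj_on_le assms by blast
  thus ?thesis using cI by (simp add: card_cartesian_product power2_eq_square)
qed

definition XY_incident :: "gnode set \<Rightarrow> gnode set \<Rightarrow> gnode set set" where
  "XY_incident S T = upairs S T - upairs (S \<inter> W) (T \<inter> W)"

lemma mass_XY_incident:
  assumes "S \<subseteq> nodes" "T \<subseteq> nodes"
  shows "mass G (XY_incident S T) = \<alpha> * card (upairs S T \<inter> XY_pairs)"
proof -
  have fin: "finite (XY_incident S T)"
    unfolding XY_incident_def using assms finite_nodes by (auto intro: finite_upairs finite_subset)
  have W: "upairs S T \<inter> upairs W W \<subseteq> upairs (S \<inter> W) (T \<inter> W)"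
    using upairs_Int_upairs[of S T W W] by auto
  have "copy_cnt e = 0" if "e \<in> XY_incident S T" for e
  proof (rule copy_cnt_outside_W)
    show "e \<in> upairs nodes nodes" using that assms upairs_mono unfolding XY_incident_def by blast
    show "e \<notin> upairs W W" using that W unfolding XY_incident_def by blast
  qed
  moreover have "XY_incident S T \<inter> matching_pairs = {}"
    using W matching_pairs_subset upairs_mono[of U W V W] unfolding XY_incident_def by blast
  moreover have "XY_incident S T \<inter> XY_pairs = upairs S T \<inter> XY_pairs"
    using XY_pairs_Int_W upairs_mono[of "S \<inter> W" W "T \<inter> W" W] unfolding XY_incident_def by blast
  ultimately show ?thesis using fin by (simp add: mass_red_graph)
qed

lemma mass_W_pairs:
  assumes "finite S" "finite T"
  shows "mass G (upairs (S \<inter> W) (T \<inter> W))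
    = (\<Sum>e\<in>upairs (S \<inter> W) (T \<inter> W). copy_cnt e) + n * \<alpha> * card (upairs (S \<inter> W) (T \<inter> W) \<inter> matching_pairs)"
proof -
  have "upairs (S \<inter> W) (T \<inter> W) \<inter> XY_pairs = {}"
    using XY_pairs_Int_W upairs_mono[of "S \<inter> W" W "T \<inter> W" W] by blast
  thus ?thesis using assms by (simp add: mass_red_graph finite_upairs)
qed

text \<open>Cauchy--Schwarz on the split of a block into its \<open>XY\<close>-incident pairs and its pairs inside \<open>W\<close>;
  the latter carry at most \<open>n \<alpha> p + 2 m\<close> edges on at least \<open>p\<^sup>2\<close> pairs.\<close>
lemma block_sq_mass_le:
  assumes "S \<subseteq> nodes" "T \<subseteq> nodes"
  shows "real (mass G (upairs S T))^2 / real (card (upairs S T))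
     \<le> (real \<alpha>)^2 * (real (card (upairs S T \<inter> XY_pairs))^2 / real (card (XY_incident S T)))
        + (real n * real \<alpha> + 2 * real m)^2"
proof -
  have fin: "finite S" "finite T" using assms finite_nodes finite_subset by blast+
  define E2 where "E2 = upairs (S \<inter> W) (T \<inter> W)"
  define q where "q = card (upairs S T \<inter> XY_pairs)"
  define L where "L = (\<Sum>e\<in>E2. copy_cnt e)"
  define p where "p = card (E2 \<inter> matching_pairs)"
  have fE2: "finite E2" unfolding E2_def using fin by (simp add: finite_upairs)
  have fE1: "finite (XY_incident S T)" unfolding XY_incident_def using fin by (simp add: finite_upairs)
  have split: "upairs S T = XY_incident S T \<union> E2" "XY_incident S T \<inter> E2 = {}"
    unfolding XY_incident_def E2_def using upairs_mono[of "S \<inter> W" S "T \<inter> W" T] by auto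
  have "mass G (upairs S T) = mass G (XY_incident S T) + mass G E2"
    using mass_Un[OF fE1 fE2 split(2)] split(1) by simp
  hence mass: "mass G (upairs S T) = \<alpha> * q + (L + n * \<alpha> * p)"
    using mass_XY_incident[OF assms] mass_W_pairs[OF fin] unfolding q_def L_def p_def E2_def by simp
  have card: "card (upairs S T) = card (XY_incident S T) + card E2"
    using card_Un_disjoint[OF fE1 fE2 split(2)] unfolding split(1)[symmetric] .
  have "E2 \<noteq> {}" if "L > 0" using that unfolding L_def by auto
  hence L1: "L > 0 \<Longrightarrow> card E2 \<ge> 1" using fE2 by (simp add: Suc_le_eq card_gt_0_iff)
  have q0: "card (XY_incident S T) = 0 \<Longrightarrow> q = 0"
  proof -
    assume "card (XY_incident S T) = 0"
    moreover have "upairs S T \<inter> XY_pairs \<subseteq> XY_incident S T"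
      using XY_pairs_Int_W upairs_mono[of "S \<inter> W" W "T \<inter> W" W] unfolding XY_incident_def by blast
    ultimately show "q = 0" using fE1 unfolding q_def by auto
  qed
  have "card E2 = 0 \<Longrightarrow> L = 0 \<and> p = 0" using fE2 unfolding L_def p_def by simp
  moreover have "(real n * real \<alpha> * real p + real L)^2 / real (card E2) \<le> (real n * real \<alpha> + 2 * real m)^2"
  proof (rule matched_sq_div_le)
    show "card E2 \<ge> p^2" unfolding p_def E2_def by (rule card_matching_pairs_sq_le) (use fE2 in \<open>simp add: E2_def\<close>)
    show "real L \<le> 2 * real m" using sum_copy_cnt_le[OF fE2] unfolding L_def by linarith
  qed (use L1 in simp_all)
  ultimately have "real (mass G (upairs S T))^2 / real (card (upairs S T))
      \<le> (real \<alpha> * real q)^2 / real (card (XY_incident S T)) + (real n * real \<alpha> + 2 * real m)^2"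
    using add_sq_divide_le[of "real (card (XY_incident S T))" "real (card E2)" "real \<alpha> * real q"
        "real n * real \<alpha> * real p + real L"] q0
    unfolding mass card by (simp add: algebra_simps)
  thus ?thesis unfolding q_def by (simp add: power_mult_distrib)
qed

lemma card_Int_nodes:
  assumes "S \<subseteq> nodes"
  shows "card S = card (S \<inter> X) + card (S \<inter> Y) + card (S \<inter> W)"
proof -
  have fin: "finite S" using assms finite_nodes finite_subset by blast
  have "S = ((S \<inter> X) \<union> (S \<inter> Y)) \<union> (S \<inter> W)" using assms unfolding red_nodes_def by auto
  moreover have "((S \<inter> X) \<union> (S \<inter> Y)) \<inter> (S \<inter> W) = {}" "(S \<inter> X) \<inter> (S \<inter> Y) = {}" by auto
  ultimately show ?thesis using fin by (metis card_Un_disjoint finite_Int finite_Un)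
qed

lemma card_self_XY_pairs:
  "finite S \<Longrightarrow> card (upairs S S \<inter> XY_pairs) = card (S \<inter> X) * card (S \<inter> Y)"
  unfolding XY_pairs_def upairs_self_Int_upairs by (rule card_upairs_disjoint) auto

lemma card_cross_XY_pairs:
  assumes "finite A" "finite B" "A \<inter> B = {}"
  shows "card (upairs A B \<inter> XY_pairs) = card (A \<inter> X) * card (B \<inter> Y) + card (A \<inter> Y) * card (B \<inter> X)"
proof -
  have "card (upairs A B \<inter> XY_pairs) = card (upairs (A \<inter> X) (B \<inter> Y) \<union> upairs (A \<inter> Y) (B \<inter> X))"
    unfolding XY_pairs_def upairs_Int_upairs ..
  also have "\<dots> = card (upairs (A \<inter> X) (B \<inter> Y)) + card (upairs (A \<inter> Y) (B \<inter> X))"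
    by (rule card_Un_disjoint) (use assms upairs_Int_upairs_disjoint[OF assms(3), of X Y] in
        \<open>auto simp: finite_upairs\<close>)
  also have "\<dots> = card (A \<inter> X) * card (B \<inter> Y) + card (A \<inter> Y) * card (B \<inter> X)"
    using assms by (subst card_upairs_disjoint, auto)+
  finally show ?thesis .
qed

lemma card_XY_incident_self:
  assumes "finite S"
  shows "2 * real (card (XY_incident S S))
    \<ge> real (card (S \<inter> X) + card (S \<inter> Y)) * (real (card (S \<inter> X) + card (S \<inter> Y)) - 1)"
proof -
  have "upairs (S \<inter> (X \<union> Y)) (S \<inter> (X \<union> Y)) \<subseteq> XY_incident S S"
    unfolding XY_incident_def upairs_def by (auto simp: doubleton_eq_iff)
  hence "card (upairs (S \<inter> (X \<union> Y)) (S \<inter> (X \<union> Y))) \<le> card (XY_incident S S)"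
    by (rule card_mono[rotated]) (use assms in \<open>simp add: XY_incident_def finite_upairs\<close>)
  moreover have "card (S \<inter> (X \<union> Y)) = card (S \<inter> X) + card (S \<inter> Y)"
    using assms by (subst card_Un_disjoint[symmetric]) (auto intro: arg_cong[where f = card])
  ultimately show ?thesis using card_upairs_self[of "S \<inter> (X \<union> Y)"] assms by simp
qed

lemma card_XY_incident_cross:
  assumes "is_partition2 nodes A B"
  shows "card (XY_incident A B) = (card (A \<inter> X) + card (A \<inter> Y)) * (card (B \<inter> X) + card (B \<inter> Y))
    + (card (A \<inter> X) + card (A \<inter> Y)) * card (B \<inter> W) + (card (B \<inter> X) + card (B \<inter> Y)) * card (A \<inter> W)"
proof -
  have AB: "A \<subseteq> nodes" "B \<subseteq> nodes" "A \<inter> B = {}" using assms unfolding is_partition2_def by auto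
  hence fin: "finite A" "finite B" using finite_nodes finite_subset by blast+
  have "card (XY_incident A B) = card (upairs A B) - card (upairs (A \<inter> W) (B \<inter> W))"
    unfolding XY_incident_def
    by (rule card_Diff_subset) (use fin upairs_mono[of "A \<inter> W" A "B \<inter> W" B] in
        \<open>auto simp: finite_upairs intro: finite_subset\<close>)
  also have "card (upairs A B) = card A * card B" by (rule card_upairs_disjoint[OF fin AB(3)])
  also have "card (upairs (A \<inter> W) (B \<inter> W)) = card (A \<inter> W) * card (B \<inter> W)"
    by (rule card_upairs_disjoint) (use fin AB in auto)
  finally show ?thesis using card_Int_nodes[OF AB(1)] card_Int_nodes[OF AB(2)] by (simp add: algebra_simps)
qed

lemma XY_side_counts:
  assumes "is_partition2 nodes A B"
  shows "card (A \<inter> X) + card (B \<inter> X) = r" "card (A \<inter> Y) + card (B \<inter> Y) = r"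
    "card (A \<inter> W) + card (B \<inter> W) = 2 * n"
proof -
  have "X \<subseteq> nodes" "Y \<subseteq> nodes" "W \<subseteq> nodes" unfolding red_nodes_def by auto
  thus "card (A \<inter> X) + card (B \<inter> X) = r" "card (A \<inter> Y) + card (B \<inter> Y) = r"
    "card (A \<inter> W) + card (B \<inter> W) = 2 * n"
    using partition_card_split[OF assms] card_X card_Y card_W by metis+
qed

lemma unseparated_same_side_XY_ge:
  assumes "is_partition2 nodes A B" "\<not> ((X \<subseteq> A \<and> Y \<subseteq> B) \<or> (X \<subseteq> B \<and> Y \<subseteq> A))"
  shows "card (A \<inter> X) * card (A \<inter> Y) + card (B \<inter> X) * card (B \<inter> Y) \<ge> r"
proof -
  have AB: "A \<union> B = nodes" "A \<inter> B = {}" using assms(1) unfolding is_partition2_def by auto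
  have XYsub: "X \<subseteq> nodes" "Y \<subseteq> nodes" unfolding red_nodes_def by auto
  have sx: "card (B \<inter> X) = r - card (A \<inter> X)" "card (A \<inter> X) \<le> r"
    using XY_side_counts(1)[OF assms(1)] by auto
  have sy: "card (B \<inter> Y) = r - card (A \<inter> Y)" "card (A \<inter> Y) \<le> r"
    using XY_side_counts(2)[OF assms(1)] by auto
  have full: "S \<subseteq> A" if "card (A \<inter> S) = r" "S = X \<or> S = Y" for S
  proof -
    have "finite S" "card S = r" using that(2) card_X card_Y by auto
    hence "A \<inter> S = S" using that(1) by (intro card_subset_eq) auto
    thus ?thesis by blast
  qed
  have empty: "S \<subseteq> B" if "card (A \<inter> S) = 0" "S = X \<or> S = Y" for S
  proof -
    have "finite (A \<inter> S)" using that(2) by auto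
    hence "A \<inter> S = {}" using that(1) by simp
    moreover have "S \<subseteq> A \<union> B" using that(2) AB XYsub by auto
    ultimately show ?thesis by blast
  qed
  have "\<not> (card (A \<inter> X) = r \<and> card (A \<inter> Y) = 0)"
    using assms(2) full[of X] empty[of Y] by auto
  moreover have "\<not> (card (A \<inter> X) = 0 \<and> card (A \<inter> Y) = r)"
    using assms(2) full[of Y] empty[of X] by auto
  ultimately show ?thesis using same_side_products_ge[OF sx(2) sy(2)] unfolding sx(1) sy(1) by blast
qed

lemma cross_XY_sq_div_le:
  assumes "is_partition2 nodes A B"
  shows "real (card (upairs A B \<inter> XY_pairs))^2 / real (card (XY_incident A B))
    \<le> real (card (upairs A B \<inter> XY_pairs)) * (real r / (real r + 2 * real n))"
proof -
  have AB: "A \<subseteq> nodes" "B \<subseteq> nodes" "A \<inter> B = {}" using assms unfolding is_partition2_def by auto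
  hence fin: "finite A" "finite B" using finite_nodes finite_subset by blast+
  define xA where "xA = card (A \<inter> X)"
  define yA where "yA = card (A \<inter> Y)"
  define xB where "xB = card (B \<inter> X)"
  define yB where "yB = card (B \<inter> Y)"
  note sums = XY_side_counts[OF assms, folded xA_def yA_def xB_def yB_def]
  have le: "xA \<le> r" "yA \<le> r" "xB \<le> r" "yB \<le> r" using sums by auto
  have "xA * yB + yA * xB \<le> xA * r + yA * r" using le by (intro add_mono mult_le_mono) auto
  moreover have "xA * yB + yA * xB \<le> r * yB + r * xB" using le by (intro add_mono mult_le_mono) auto
  ultimately have "xA * yB + yA * xB \<le> r * (xA + yA)" "xA * yB + yA * xB \<le> r * (xB + yB)"
    by (simp_all add: algebra_simps)
  moreover have "xA + yA + (xB + yB) = 2 * r" using sums by simp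
  moreover have "card (XY_incident A B)
      = (xA + yA) * (xB + yB) + (xA + yA) * card (B \<inter> W) + (xB + yB) * card (A \<inter> W)"
    using card_XY_incident_cross[OF assms] unfolding xA_def yA_def xB_def yB_def .
  moreover have "card (upairs A B \<inter> XY_pairs) = xA * yB + yA * xB"
    using card_cross_XY_pairs[OF fin AB(3)] unfolding xA_def yA_def xB_def yB_def .
  ultimately show ?thesis
    using cross_sq_div_le[of "xA * yB + yA * xB" r "xA + yA" "xB + yB" "card (A \<inter> W)" "card (B \<inter> W)" n]
      sums(3) by presburger
qed

lemma XY_concentration_bound:
  assumes "is_partition2 nodes A B" "\<not> ((X \<subseteq> A \<and> Y \<subseteq> B) \<or> (X \<subseteq> B \<and> Y \<subseteq> A))"
  shows "real (card (upairs A A \<inter> XY_pairs))^2 / real (card (XY_incident A A))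
       + real (card (upairs A B \<inter> XY_pairs))^2 / real (card (XY_incident A B))
       + real (card (upairs B B \<inter> XY_pairs))^2 / real (card (XY_incident B B))
       \<le> (real r - real n)^2 - 3 * (real n)^2 - 2"
proof -
  have AB: "A \<subseteq> nodes" "B \<subseteq> nodes" "A \<inter> B = {}" using assms(1) unfolding is_partition2_def by auto
  hence fin: "finite A" "finite B" using finite_nodes finite_subset by blast+
  define xA where "xA = card (A \<inter> X)"
  define yA where "yA = card (A \<inter> Y)"
  define xB where "xB = card (B \<inter> X)"
  define yB where "yB = card (B \<inter> Y)"
  note sums = XY_side_counts[OF assms(1), folded xA_def yA_def xB_def yB_def]
  define Q where "Q = real (xA * yA + xB * yB)"
  have crossQ: "real (card (upairs A B \<inter> XY_pairs)) = (real r)^2 - Q"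
    using arg_cong[OF arg_cong2[OF sums(1,2), of "(*)"], of real] card_cross_XY_pairs[OF fin AB(3)]
    unfolding Q_def xA_def yA_def xB_def yB_def by (simp add: power2_eq_square algebra_simps)
  have "real r \<le> Q"
    using unseparated_same_side_XY_ge[OF assms] unfolding Q_def xA_def yA_def xB_def yB_def by linarith
  hence spread: "((real r)^2 - Q) * (real r / (real r + 2 * real n)) + 3/4 * Q + 1/2
      \<le> (real r - real n)^2 - 3 * (real n)^2 - 2"
    by (intro XY_spread_bound) (simp_all add: red_r_def)
  have "real (xA * yA)^2 / real (card (XY_incident A A)) \<le> 3/4 * real (xA * yA) + 1/4"
    "real (xB * yB)^2 / real (card (XY_incident B B)) \<le> 3/4 * real (xB * yB) + 1/4"
    unfolding xA_def yA_def xB_def yB_def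
    by (rule sq_product_div_pairs_le[OF card_XY_incident_self[OF fin(1)]],
        rule sq_product_div_pairs_le[OF card_XY_incident_self[OF fin(2)]])
  hence "real (card (upairs A A \<inter> XY_pairs))^2 / real (card (XY_incident A A))
       + real (card (upairs A B \<inter> XY_pairs))^2 / real (card (XY_incident A B))
       + real (card (upairs B B \<inter> XY_pairs))^2 / real (card (XY_incident B B))
     \<le> 3/4 * Q + 1/2 + ((real r)^2 - Q) * (real r / (real r + 2 * real n))"
    using cross_XY_sq_div_le[OF assms(1)] fin unfolding crossQ Q_def xA_def yA_def xB_def yB_def
    by (simp add: card_self_XY_pairs algebra_simps)
  thus ?thesis using spread by linarith
qed

lemma profile_LL_unseparated:
  assumes "is_partition2 nodes A B" "\<not> ((X \<subseteq> A \<and> Y \<subseteq> B) \<or> (X \<subseteq> B \<and> Y \<subseteq> A))" "n \<le> m"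
  shows "profile_LL G A B < ref_value (real \<alpha>)"
proof -
  have AB: "A \<subseteq> nodes" "B \<subseteq> nodes" using assms(1) unfolding is_partition2_def by auto
  hence fin: "finite A" "finite B" using finite_nodes finite_subset by blast+
  define C1 C2 C3 where "C1 = real (mass G (upairs A A))" and "C2 = real (mass G (upairs A B))"
    and "C3 = real (mass G (upairs B B))"
  define N1 N2 N3 where "N1 = real (card (upairs A A))" and "N2 = real (card (upairs A B))"
    and "N3 = real (card (upairs B B))"
  define Q where "Q = C1^2 / N1 + C2^2 / N2 + C3^2 / N3"
  have quad: "profile_ll C N \<le> C * ln (real \<alpha>) + C^2 / (real \<alpha> * N) - 2 * C"
    if "C = real (mass G F)" "N = real (card F)" "finite F" for C N :: real and F
    using that alpha_pos mass_pos_imp_card_pos[of F G] by (intro profile_ll_le_quadratic) auto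
  have "Q \<le> (real \<alpha>)^2 * (real (card (upairs A A \<inter> XY_pairs))^2 / real (card (XY_incident A A))
       + real (card (upairs A B \<inter> XY_pairs))^2 / real (card (XY_incident A B))
       + real (card (upairs B B \<inter> XY_pairs))^2 / real (card (XY_incident B B)))
     + 3 * (real n * real \<alpha> + 2 * real m)^2"
    using block_sq_mass_le[of A A] block_sq_mass_le[of A B] block_sq_mass_le[of B B] AB
    unfolding Q_def C1_def C2_def C3_def N1_def N2_def N3_def by (simp add: distrib_left)
  also have "\<dots> \<le> (real \<alpha>)^2 * ((real r - real n)^2 - 3 * (real n)^2 - 2) + 3 * (real n * real \<alpha> + 2 * real m)^2"
    using XY_concentration_bound[OF assms(1,2)] by (intro add_right_mono mult_left_mono) auto
  finally have Q: "Q \<le> \<dots>" .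
  have total: "C1 + C2 + C3 = ((real r)^2 + (real n)^2) * real \<alpha> + real copy_mass"
    using arg_cong[OF block_masses_sum[OF assms(1)], of real] unfolding C1_def C2_def C3_def
    by (simp add: power2_eq_square algebra_simps)
  have "profile_LL G A B \<le> (C1 + C2 + C3) * ln (real \<alpha>)
      + (C1^2 / (real \<alpha> * N1) + C2^2 / (real \<alpha> * N2) + C3^2 / (real \<alpha> * N3))
      - 2 * (C1 + C2 + C3)"
    using quad[OF C1_def N1_def] quad[OF C2_def N2_def] quad[OF C3_def N3_def] fin
    unfolding profile_LL_def C1_def C2_def C3_def N1_def N2_def N3_def
    by (simp add: finite_upairs algebra_simps)
  also have "C1^2 / (real \<alpha> * N1) + C2^2 / (real \<alpha> * N2) + C3^2 / (real \<alpha> * N3) = Q / real \<alpha>"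
    unfolding Q_def by (simp add: add_divide_distrib divide_divide_eq_left mult.commute)
  finally have "profile_LL G A B < ((real r)^2 + (real n)^2) * real \<alpha> * ln (real \<alpha>)
      - real \<alpha> * (real r + real n)^2
      - real copy_mass * ln (real ref_pairs) - 2"
    using unseparated_bound[OF real_alpha_ge real_r_eq _ _ _ _ ref_pairs_bounds refl Q] total assms(3)
      copy_mass_le by simp
  thus ?thesis unfolding ref_value_def by (simp add: power2_eq_square algebra_simps)
qed

section \<open>Partitions keeping some \<open>u\<^sub>i\<close>, \<open>v\<^sub>i\<close> together\<close>

definition pairs_within :: "gnode set \<Rightarrow> nat set" where
  "pairs_within S = {..<n} \<inter> {i. NU i \<in> S \<and> NV i \<in> S}"

lemma real_card_Int_W:
  assumes "is_partition2 nodes A B"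
  shows "real (card (A \<inter> W)) = real n + real (card (pairs_within A)) - real (card (pairs_within B))"
proof -
  have side: "NU i \<in> B \<longleftrightarrow> NU i \<notin> A" "NV i \<in> B \<longleftrightarrow> NV i \<notin> A" if "i < n" for i
    using assms that unfolding is_partition2_def red_nodes_def by auto
  have "A \<inter> U = NU ` ({..<n} \<inter> {i. NU i \<in> A})" "A \<inter> V = NV ` ({..<n} \<inter> {i. NV i \<in> A})" by auto
  hence "card (A \<inter> W) = card ({..<n} \<inter> {i. NU i \<in> A}) + card ({..<n} \<inter> {i. NV i \<in> A})"
    by (subst Int_Un_distrib, subst card_Un_disjoint) (auto simp: card_image inj_on_def)
  hence "real (card (A \<inter> W)) = (\<Sum>i<n. of_bool (NU i \<in> A) + of_bool (NV i \<in> A))"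
    by (simp add: sum.distrib)
  also have "\<dots> = (\<Sum>i<n. 1 + of_bool (NU i \<in> A \<and> NV i \<in> A) - of_bool (NU i \<in> B \<and> NV i \<in> B))"
    using side by (intro sum.cong) auto
  finally show ?thesis unfolding pairs_within_def by (simp add: sum.distrib sum_subtractf)
qed

lemma mass_self_ge_pairs_within:
  assumes "finite S"
  shows "n * \<alpha> * card (pairs_within S) \<le> mass G (upairs S S)"
proof -
  have "(\<lambda>i. {NU i, NV i}) ` pairs_within S \<subseteq> upairs S S \<inter> matching_pairs"
    unfolding pairs_within_def matching_pairs_def upairs_def by auto
  moreover have "inj_on (\<lambda>i. {NU i, NV i}) (pairs_within S)" by (auto simp: inj_on_def doubleton_eq_iff)
  ultimately have "card (pairs_within S) \<le> card (upairs S S \<inter> matching_pairs)"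
    using assms by (metis card_image card_mono finite_Int finite_upairs)
  hence "n * \<alpha> * card (pairs_within S) \<le> n * \<alpha> * card (upairs S S \<inter> matching_pairs)"
    by (rule mult_le_mono2)
  also have "\<dots> \<le> mass G (upairs S S)" using assms by (simp add: mass_red_graph finite_upairs)
  finally show ?thesis .
qed

lemma card_pairs_within_le:
  assumes "A \<inter> B = {}"
  shows "card (pairs_within A) + card (pairs_within B) \<le> n"
proof -
  have "pairs_within A \<inter> pairs_within B = {}" using assms unfolding pairs_within_def by auto
  hence "card (pairs_within A) + card (pairs_within B) = card (pairs_within A \<union> pairs_within B)"
    by (simp add: card_Un_disjoint pairs_within_def)
  also have "\<dots> \<le> card {..<n}" by (rule card_mono) (auto simp: pairs_within_def)
  finally show ?thesis by simp
qed

lemma card_cross_separated: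
  assumes "is_partition2 nodes A B" "X \<subseteq> A" "Y \<subseteq> B"
  shows "real (card (upairs A B))
    = (real r + real n)^2 - (real (card (pairs_within A)) - real (card (pairs_within B)))^2"
proof -
  define d where "d = real (card (pairs_within A)) - real (card (pairs_within B))"
  have AB: "A \<subseteq> nodes" "B \<subseteq> nodes" "A \<inter> B = {}" using assms(1) unfolding is_partition2_def by auto
  hence fin: "finite A" "finite B" using finite_nodes finite_subset by blast+
  have "card (A \<inter> X) = r" "A \<inter> Y = {}" "card (B \<inter> Y) = r" "B \<inter> X = {}"
    using assms(2,3) AB(3) card_X card_Y by (auto simp: Int_absorb1)
  hence cAB: "real (card A) = real r + real n + d" "real (card B) = real r + real n - d"
    using card_Int_nodes[OF AB(1)] card_Int_nodes[OF AB(2)] real_card_Int_W[OF assms(1)]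
      real_card_Int_W[of B A] assms(1) unfolding d_def is_partition2_def by (auto simp: Un_commute Int_commute)
  have "real (card (upairs A B)) = real (card A) * real (card B)"
    using card_upairs_disjoint[OF fin AB(3)] by simp
  also have "\<dots> = (real r + real n)^2 - d^2" unfolding cAB by (simp add: power2_eq_square algebra_simps)
  finally show ?thesis unfolding d_def .
qed

lemma cross_deficit_le:
  assumes "is_partition2 nodes A B" "X \<subseteq> A" "Y \<subseteq> B"
  shows "(real r + real n)^2 - real (card (upairs A B))
    \<le> real (card (pairs_within A) + card (pairs_within B)) * real n"
proof -
  define t where "t = real (card (pairs_within A) + card (pairs_within B))"
  have "t \<le> real n"
    using card_pairs_within_le assms(1) unfolding t_def is_partition2_def by (metis of_nat_le_iff)
  have "(real (card (pairs_within A)) - real (card (pairs_within B)))^2 \<le> t^2"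
    unfolding t_def by (simp add: power2_eq_square algebra_simps)
  also have "t^2 \<le> t * real n" using \<open>t \<le> real n\<close> by (simp add: power2_eq_square mult_left_mono t_def)
  finally show ?thesis using card_cross_separated[OF assms] unfolding t_def by simp
qed

lemma profile_LL_split_pair:
  assumes "is_partition2 nodes A B" "X \<subseteq> A" "Y \<subseteq> B" "n \<le> m"
    and "i < n" "(NU i \<in> A \<and> NV i \<in> A) \<or> (NU i \<in> B \<and> NV i \<in> B)"
  shows "\<exists>rate > 0. profile_LL G A B < ref_value rate"
proof -
  have AB: "A \<subseteq> nodes" "B \<subseteq> nodes" "A \<inter> B = {}" using assms(1) unfolding is_partition2_def by auto
  hence fin: "finite A" "finite B" using finite_nodes finite_subset by blast+
  define t where "t = real (card (pairs_within A) + card (pairs_within B))"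
  have "i \<in> pairs_within A \<or> i \<in> pairs_within B" using assms(5,6) unfolding pairs_within_def by auto
  moreover have "finite (pairs_within S)" for S unfolding pairs_within_def by simp
  ultimately have "card (pairs_within A) \<ge> 1 \<or> card (pairs_within B) \<ge> 1"
    by (auto simp: Suc_le_eq card_gt_0_iff)
  hence t1: "t \<ge> 1" unfolding t_def by linarith
  have missing: "(real r + real n)^2 - real (card (upairs A B)) \<le> t * real n"
    using cross_deficit_le[OF assms(1-3)] unfolding t_def .
  have XY: "XY_pairs \<subseteq> upairs A B" unfolding XY_pairs_def using upairs_mono[OF assms(2,3)] .
  have Cc: "mass G (upairs A B) \<ge> \<alpha> * (r * r)"
    using XY fin by (simp add: mass_red_graph finite_upairs card_XY_pairs Int_absorb1)
  have Ncr: "card (upairs A B) \<ge> r * r"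
    using card_mono[OF _ XY] card_XY_pairs fin by (simp add: finite_upairs)
  define rate where "rate = real (mass G (upairs A B)) / real (card (upairs A B))"
  have rr: "0 < r * r" by (simp add: red_r_def)
  hence "0 < \<alpha> * (r * r)" using alpha_pos by simp
  hence "mass G (upairs A B) > 0" "card (upairs A B) > 0" using Cc Ncr rr by linarith+
  hence "rate > 0" unfolding rate_def by simp
  moreover have "profile_ll (real (mass G (upairs A B))) (real (card (upairs A B)))
        + profile_ll (real (mass G (upairs A A))) (real (card (upairs A A)))
        + profile_ll (real (mass G (upairs B B))) (real (card (upairs B B)))
      < ((real r)^2 + (real n)^2) * real \<alpha> * ln rate - rate * (real r + real n)^2
        - real copy_mass * ln (real ref_pairs) - 2"
    unfolding rate_def
  proof (intro separated_bound[where t = t, OF real_alpha_ge real_r_eq _ _ _ _ ref_pairs_bounds refl])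
    show "real (mass G (upairs A A)) + real (mass G (upairs B B)) + real (mass G (upairs A B))
      = ((real r)^2 + (real n)^2) * real \<alpha> + real copy_mass"
      using arg_cong[OF block_masses_sum[OF assms(1)], of real] by (simp add: power2_eq_square algebra_simps)
    show "real (mass G (upairs A A)) + real (mass G (upairs B B)) \<ge> t * real n * real \<alpha>"
      using mass_self_ge_pairs_within[OF fin(1)] mass_self_ge_pairs_within[OF fin(2)] unfolding t_def
      by (simp add: algebra_simps flip: of_nat_mult of_nat_add)
    show "real (mass G (upairs A B)) \<ge> (real r)^2 * real \<alpha>"
      using Cc by (simp add: power2_eq_square algebra_simps flip: of_nat_mult)
    show "real (card (upairs A B)) \<ge> (real r)^2"
      using Ncr by (simp add: power2_eq_square flip: of_nat_mult)
    show "2 * real (card (upairs A A)) \<ge> real r * (real r - 1)"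
      using card_upairs_self_ge[OF assms(2) fin(1)] card_X by simp
    show "2 * real (card (upairs B B)) \<ge> real r * (real r - 1)"
      using card_upairs_self_ge[OF assms(3) fin(2)] card_Y by simp
    show "real (card (upairs A B)) \<le> (real r + real n)^2" using card_cross_separated[OF assms(1-3)] by simp
    show "real copy_mass \<le> 2 * real m" using copy_mass_le by linarith
  qed (use assms(5) t1 missing in auto)
  ultimately show ?thesis unfolding profile_LL_def ref_value_def
    by (intro exI[of _ rate]) (simp add: power2_eq_square algebra_simps)
qed

lemma max_likelihood_separates_XY:
  assumes "is_ML_partition G nodes A B" "n \<le> m"
  shows "(X \<subseteq> A \<and> Y \<subseteq> B) \<or> (X \<subseteq> B \<and> Y \<subseteq> A)"
proof (rule ccontr)
  assume "\<not> ?thesis"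
  moreover have "is_partition2 nodes A B" using assms(1) unfolding is_ML_partition_def by blast
  ultimately have "profile_LL G A B < ref_value (real \<alpha>)" using profile_LL_unseparated assms(2) by blast
  thus False using ref_value_le_profile_LL[OF assms(1) alpha_pos] by linarith
qed

lemma max_likelihood_splits_pairs:
  assumes "is_ML_partition G nodes A B" "n \<le> m" "X \<subseteq> A" "Y \<subseteq> B" "i < n"
  shows "\<not> (NU i \<in> A \<and> NV i \<in> A) \<and> \<not> (NU i \<in> B \<and> NV i \<in> B)"
proof (rule ccontr)
  assume "\<not> ?thesis"
  moreover have "is_partition2 nodes A B" using assms(1) unfolding is_ML_partition_def by blast
  ultimately obtain rate where "rate > 0" "profile_LL G A B < ref_value rate"
    using profile_LL_split_pair assms(2-5) by blast
  thus False using ref_value_le_profile_LL[OF assms(1)] by (meson not_le)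
qed

end

theorem lemma1:
  fixes n :: nat and E :: "nat \<Rightarrow> nat \<Rightarrow> bool" and P1 P2 :: "gnode set"
  assumes "simple_graph n E"
    and "card (sedges n E) \<ge> n"
    and "is_ML_partition (red_graph n E) (red_nodes n) P1 P2"
  shows "((NX ` {..<red_r n} \<subseteq> P1 \<and> NY ` {..<red_r n} \<subseteq> P2) \<or>
          (NX ` {..<red_r n} \<subseteq> P2 \<and> NY ` {..<red_r n} \<subseteq> P1)) \<and>
         (\<forall>i<n. (NU i \<in> P1 \<longrightarrow> NV i \<in> P2) \<and> (NV i \<in> P1 \<longrightarrow> NU i \<in> P2))"
proof -
  interpret reduction n E .
  have nm: "n \<le> m" using assms(2) unfolding m_def .
  have sep: "(X \<subseteq> P1 \<and> Y \<subseteq> P2) \<or> (X \<subseteq> P2 \<and> Y \<subseteq> P1)"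
    by (rule max_likelihood_separates_XY[OF assms(3) nm])
  have "\<not> (NU i \<in> P1 \<and> NV i \<in> P1)" if "i < n" for i
    using sep
  proof
    assume "X \<subseteq> P1 \<and> Y \<subseteq> P2"
    thus ?thesis using max_likelihood_splits_pairs[OF assms(3) nm _ _ that] by blast
  next
    assume "X \<subseteq> P2 \<and> Y \<subseteq> P1"
    thus ?thesis using max_likelihood_splits_pairs[OF is_ML_partition_commute[OF assms(3)] nm _ _ that] by blast
  qed
  moreover have "NU i \<in> P1 \<or> NU i \<in> P2" "NV i \<in> P1 \<or> NV i \<in> P2" if "i < n" for i
    using assms(3) that unfolding is_ML_partition_def is_partition2_def red_nodes_def by auto
  ultimately show ?thesis using sep by blast
qed

end
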